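(* Let $\mathcal{A},\hat{\mathcal{A}}$ be nonnegative combinatorially symmetric weakly irreducible tensors of order $m$ and dimension $n$ such that $\mathrm{sp}(\hat{\mathcal{A}})\le\mathrm{sp}(\mathcal{A})$. Then $\mathbb{P}\mathbb{S}_0(\mathcal{A})$ is a $\mathbb{Z}_m$-submodule of $\mathbb{P}\mathbb{S}_0(\hat{\mathcal{A}})$. Consequently $s(\mathcal{A})\mid s(\hat{\mathcal{A}})$ and $\gamma(\mathcal{A})\le\gamma(\hat{\mathcal{A}})$.
   Context: Tensors: order $m$, dimension $n$, entries $a_{i_1\cdots i_m}$; $\mathrm{sp}(\mathcal{A})$ is the $0/1$ tensor marking nonzero entries, compared entrywise. Eigenvectors: $\mathcal{A}x^{m-1}=\lambda x^{[m-1]}$, $x\ne0$, $(\mathcal{A}x^{m-1})_i=\sum a_{ii_2\cdots i_m}x_{i_2}\cdots x_{i_m}$; $\rho(\mathcal{A})$ spectral radius. Weakly irreducible: digraph on $[n]$ with arc $(i,j)$ whenever some $a_{ii_2\cdots i_m}\ne0$ with $j\in\{i_2,\dots,i_m\}$ is strongly connected. Combinatorially symmetric: support invariant under index permutations. Incidence matrix $B_{\mathcal{A}}$: rows indexed by $E(\mathcal{A})=\{(i_1,\dots,i_m): a_{i_1\cdots i_m}\ne0, i_1\le\dots\le i_m\}$, $b_{e,j}=|\{k:i_k=j\}|$, over $\mathbb{Z}_m$. $\mathbb{P}\mathbb{S}_0(\mathcal{A})=\{x\in\mathbb{Z}_m^n: B_{\mathcal{A}}x=0,\ x_1=0\}$.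 Stabilizing index $s(\mathcal{A})$: number of invertible diagonal $D$ with $d_{11}=1$ and $\mathcal{A}=D^{-(m-1)}\mathcal{A}D$, where $(D^{-(m-1)}\mathcal{A}D)_{i_1\cdots i_m}=d_{i_1}^{-(m-1)}a_{i_1\cdots i_m}d_{i_2}\cdots d_{i_m}$. Stabilizing dimension $\gamma(\mathcal{A})$: composition length of the $\mathbb{Z}_m$-module $\mathbb{P}\mathbb{V}_{\rho(\mathcal{A})}$ of eigenvectors for $\rho(\mathcal{A})$ normalized by $y_1=1$ (these have no zero entries), with operation $y\circ\hat y=D_yD_{\hat y}v_p$, $D_y=\mathrm{diag}(y_i/|y_i|)$, $v_p$ its positive element. *)

theory Defs
  imports Complex_Main "HOL-Library.FuncSet" "HOL-Library.Multiset"
begin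

text \<open>A tensor of order m and dimension n is a function on index lists
  (i_1,...,i_m) with entries in {1..n}; values outside are irrelevant.\<close>
type_synonym tensor = "nat list \<Rightarrow> real"

definition tidx :: "nat \<Rightarrow> nat \<Rightarrow> nat list set" where
  "tidx m n = {xs. length xs = m \<and> set xs \<subseteq> {1..n}}"

definition nonneg_tensor :: "nat \<Rightarrow> nat \<Rightarrow> tensor \<Rightarrow> bool" where
  "nonneg_tensor m n A \<longleftrightarrow> (\<forall>xs\<in>tidx m n. A xs \<ge> 0)"

definition sp_le :: "nat \<Rightarrow> nat \<Rightarrow> tensor \<Rightarrow> tensor \<Rightarrow> bool" where
  "sp_le m n Ahat A \<longleftrightarrow> (\<forall>xs\<in>tidx m n. Ahat xs \<noteq> 0 \<longrightarrow> A xs \<noteq> 0)"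

definition comb_symmetric :: "nat \<Rightarrow> nat \<Rightarrow> tensor \<Rightarrow> bool" where
  "comb_symmetric m n A \<longleftrightarrow>
     (\<forall>xs\<in>tidx m n. \<forall>ys\<in>tidx m n. mset xs = mset ys \<longrightarrow> (A xs \<noteq> 0 \<longleftrightarrow> A ys \<noteq> 0))"

definition tensor_digraph :: "nat \<Rightarrow> nat \<Rightarrow> tensor \<Rightarrow> (nat \<times> nat) set" where
  "tensor_digraph m n A =
     {(i, j). \<exists>xs\<in>tidx m n. A xs \<noteq> 0 \<and> hd xs = i \<and> j \<in> set (tl xs)}"

definition weakly_irreducible :: "nat \<Rightarrow> nat \<Rightarrow> tensor \<Rightarrow> bool" where
  "weakly_irreducible m n A \<longleftrightarrow>
     (\<forall>i\<in>{1..n}. \<forall>j\<in>{1..n}. (i, j) \<in> (tensor_digraph m n A)\<^sup>*)"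

definition tensor_apply :: "nat \<Rightarrow> nat \<Rightarrow> tensor \<Rightarrow> (nat \<Rightarrow> complex) \<Rightarrow> nat \<Rightarrow> complex" where
  "tensor_apply m n A x i =
     (\<Sum>ys\<in>tidx (m - 1) n. complex_of_real (A (i # ys)) * prod_list (map x ys))"

definition is_eigenpair :: "nat \<Rightarrow> nat \<Rightarrow> tensor \<Rightarrow> complex \<Rightarrow> (nat \<Rightarrow> complex) \<Rightarrow> bool" where
  "is_eigenpair m n A lam x \<longleftrightarrow>
     (\<exists>i\<in>{1..n}. x i \<noteq> 0) \<and>
     (\<forall>i\<in>{1..n}. tensor_apply m n A x i = lam * x i ^ (m - 1))"

definition spectral_radius :: "nat \<Rightarrow> nat \<Rightarrow> tensor \<Rightarrow> real" where
  "spectral_radius m n A = Sup {cmod lam | lam. \<exists>x. is_eigenpair m n A lam x}"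

definition edge_set :: "nat \<Rightarrow> nat \<Rightarrow> tensor \<Rightarrow> nat list set" where
  "edge_set m n A = {e\<in>tidx m n. A e \<noteq> 0 \<and> sorted e}"

definition incidence :: "nat list \<Rightarrow> nat \<Rightarrow> nat" where
  "incidence e j = count_list e j"

definition zm_vectors :: "nat \<Rightarrow> nat \<Rightarrow> (nat \<Rightarrow> nat) set" where
  "zm_vectors m n = {1..n} \<rightarrow>\<^sub>E {0..<m}"

definition PS0 :: "nat \<Rightarrow> nat \<Rightarrow> tensor \<Rightarrow> (nat \<Rightarrow> nat) set" where
  "PS0 m n A = {x\<in>zm_vectors m n.
      (\<forall>e\<in>edge_set m n A. (\<Sum>j=1..n. incidence e j * x j) mod m = 0) \<and> x 1 = 0}"

definition zm_submodule :: "nat \<Rightarrow> nat \<Rightarrow> (nat \<Rightarrow> nat) set \<Rightarrow> (nat \<Rightarrow> nat) set \<Rightarrow> bool" where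
  "zm_submodule m n S T \<longleftrightarrow> S \<subseteq> T \<and> T \<subseteq> zm_vectors m n \<and>
     (\<lambda>i\<in>{1..n}. 0) \<in> S \<and>
     (\<forall>x\<in>S. \<forall>y\<in>S. (\<lambda>i\<in>{1..n}. (x i + y i) mod m) \<in> S) \<and>
     (\<forall>k<m. \<forall>x\<in>S. (\<lambda>i\<in>{1..n}. (k * x i) mod m) \<in> S)"

definition stab_set :: "nat \<Rightarrow> nat \<Rightarrow> tensor \<Rightarrow> (nat \<Rightarrow> complex) set" where
  "stab_set m n A = {d \<in> {1..n} \<rightarrow>\<^sub>E (UNIV - {0}). d 1 = 1 \<and>
     (\<forall>xs\<in>tidx m n. complex_of_real (A xs) =
        inverse (d (hd xs)) ^ (m - 1) * complex_of_real (A xs) * prod_list (map d (tl xs)))}"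

definition stab_index :: "nat \<Rightarrow> nat \<Rightarrow> tensor \<Rightarrow> nat" where
  "stab_index m n A = card (stab_set m n A)"

definition PV :: "nat \<Rightarrow> nat \<Rightarrow> tensor \<Rightarrow> (nat \<Rightarrow> complex) set" where
  "PV m n A = {y \<in> {1..n} \<rightarrow>\<^sub>E UNIV.
      is_eigenpair m n A (complex_of_real (spectral_radius m n A)) y \<and> y 1 = 1}"

definition vpos :: "nat \<Rightarrow> nat \<Rightarrow> tensor \<Rightarrow> (nat \<Rightarrow> complex)" where
  "vpos m n A = (THE y. y \<in> PV m n A \<and> (\<forall>i\<in>{1..n}. Im (y i) = 0 \<and> Re (y i) > 0))"

definition pv_op :: "nat \<Rightarrow> nat \<Rightarrow> tensor \<Rightarrow> (nat \<Rightarrow> complex) \<Rightarrow> (nat \<Rightarrow> complex) \<Rightarrow> (nat \<Rightarrow> complex)" where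
  "pv_op m n A y z = (\<lambda>i\<in>{1..n}.
      (y i / complex_of_real (cmod (y i))) * (z i / complex_of_real (cmod (z i))) * vpos m n A i)"

text \<open>submodules of the Z_m-module (PV, pv_op) with zero vpos: subsets containing
  the zero and closed under the addition (scalar multiples are iterated sums)\<close>
definition pv_submodule :: "nat \<Rightarrow> nat \<Rightarrow> tensor \<Rightarrow> (nat \<Rightarrow> complex) set \<Rightarrow> bool" where
  "pv_submodule m n A H \<longleftrightarrow> H \<subseteq> PV m n A \<and> vpos m n A \<in> H \<and>
     (\<forall>y\<in>H. \<forall>z\<in>H. pv_op m n A y z \<in> H)"

text \<open>composition length = maximal length of a strict chain of submodules\<close>
definition stab_dim :: "nat \<Rightarrow> nat \<Rightarrow> tensor \<Rightarrow> nat" where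
  "stab_dim m n A = (GREATEST k. \<exists>H :: nat \<Rightarrow> (nat \<Rightarrow> complex) set.
      (\<forall>j\<le>k. pv_submodule m n A (H j)) \<and> (\<forall>j<k. H j \<subset> H (Suc j)))"

end

theory Submission
  imports Defs "HOL-Analysis.Analysis" "HOL-Algebra.Coset"
begin

text \<open>Shrinking the support of a tensor only removes conditions: every congruence defining
  PS_0(Ahat) and every identity defining a stabilizing matrix of Ahat is already one for A.
  Hence PS_0(A) is a submodule of PS_0(Ahat), and the stabilizing matrices of A form a
  subgroup of those of Ahat, so Lagrange's theorem gives s(A) dvd s(Ahat).
  For the stabilizing dimension, a Perron--Frobenius argument (a Collatz--Wielandt
  minimization over a compact set, then equality in the triangle inequality) shows that
  every y in PV_rho(A) factors as D_y v_p, where v_p is the positive eigenvector and D_y is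
  stabilizing, and that conversely D v_p lies in PV_rho(A) for every stabilizing D.
  Hence y \<mapsto> D_y vhat_p embeds PV_rho(A) into PV_rho(Ahat) as a module homomorphism, and
  it maps strict chains of submodules to strict chains.\<close>

lemma prod_list_map_pos:
  "(\<And>j. j \<in> set ys \<Longrightarrow> 0 < x j) \<Longrightarrow> 0 < prod_list (map x ys :: 'a::linordered_semidom list)"
  by (induction ys) auto

lemma prod_list_map_mono:
  "(\<And>j. j \<in> set ys \<Longrightarrow> 0 \<le> x j \<and> x j \<le> y j) \<Longrightarrow>
   prod_list (map x ys :: 'a::linordered_semidom list) \<le> prod_list (map y ys)"
proof (induction ys)
  case (Cons a ys)
  have "0 \<le> prod_list (map x ys)" using Cons.prems by (intro prod_list_nonneg) auto
  moreover have "prod_list (map x ys) \<le> prod_list (map y ys)" using Cons by simp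
  moreover have "0 \<le> x a" "x a \<le> y a" using Cons.prems by auto
  ultimately show ?case by (simp add: mult_mono order_trans)
qed simp

lemma prod_list_map_strict_mono:
  assumes "\<And>j. j \<in> set ys \<Longrightarrow> 0 \<le> x j \<and> x j \<le> y j \<and> 0 < y j" and "\<exists>j\<in>set ys. x j < y j"
  shows "prod_list (map x ys :: 'a::linordered_semidom list) < prod_list (map y ys)"
  using assms
proof (induction ys)
  case (Cons a ys)
  have le: "prod_list (map x ys) \<le> prod_list (map y ys)"
    using Cons.prems(1) by (intro prod_list_map_mono) auto
  have py: "0 < prod_list (map y ys)" using Cons.prems(1) by (intro prod_list_map_pos) auto
  have px: "0 \<le> prod_list (map x ys)" using Cons.prems(1) by (intro prod_list_nonneg) auto
  show ?case
  proof (cases "x a < y a")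
    case True
    have "x a * prod_list (map x ys) \<le> x a * prod_list (map y ys)"
      using le Cons.prems(1) by (intro mult_left_mono) auto
    also have "\<dots> < y a * prod_list (map y ys)" using True py by (rule mult_strict_right_mono)
    finally show ?thesis by simp
  next
    case False
    then have "prod_list (map x ys) < prod_list (map y ys)" using Cons by auto
    then have "y a * prod_list (map x ys) < y a * prod_list (map y ys)"
      using Cons.prems(1) by (intro mult_strict_left_mono) auto
    moreover have "x a * prod_list (map x ys) \<le> y a * prod_list (map x ys)"
      using Cons.prems(1) px by (intro mult_right_mono) auto
    ultimately show ?thesis by simp
  qed
qed simp

lemma prod_list_map_ge_one_factor:
  assumes "\<And>j. j \<in> set ys \<Longrightarrow> c \<le> x j" and "0 \<le> c" and "u \<in> set ys"
  shows "x u * c ^ (length ys - 1) \<le> prod_list (map x ys :: 'a::linordered_semidom list)"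
  using assms
proof (induction ys)
  case (Cons a ys)
  have xa: "c \<le> x a" "0 \<le> x a" using Cons.prems(1,2) by (auto intro: order_trans)
  have "prod_list (map (\<lambda>_. c) ys) \<le> prod_list (map x ys)"
    using Cons.prems by (intro prod_list_map_mono) auto
  then have cpow: "c ^ length ys \<le> prod_list (map x ys)"
    by (simp add: map_replicate_const)
  show ?case
  proof (cases "u = a")
    case True
    then show ?thesis using cpow xa by (simp add: mult_left_mono)
  next
    case False
    then have u: "u \<in> set ys" using Cons.prems by auto
    have "x u * c ^ (length (a # ys) - 1) = c * (x u * c ^ (length ys - 1))"
      using u by (cases ys) (auto simp: algebra_simps)
    also have "\<dots> \<le> x a * prod_list (map x ys)"
    proof (rule mult_mono)
      have "0 \<le> x u" using Cons.prems(1,2) u by (meson list.set_intros(2) order_trans)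
      then show "0 \<le> x u * c ^ (length ys - 1)" using Cons.prems(2) by simp
    qed (use Cons u xa in auto)
    finally show ?thesis by simp
  qed
qed simp

lemma prod_list_map_const_mult:
  "prod_list (map (\<lambda>j. t * x j) ys) = t ^ length ys * prod_list (map x ys :: 'a::comm_monoid_mult list)"
  by (induction ys) (auto simp: algebra_simps)

lemma prod_list_map_mult:
  "prod_list (map (\<lambda>j. f j * g j) ys) = prod_list (map f ys) * prod_list (map g ys :: 'a::comm_monoid_mult list)"
  by (induction ys) (auto simp: algebra_simps)

lemma prod_list_map_inverse:
  "prod_list (map (\<lambda>j. inverse (f j)) ys) = inverse (prod_list (map f ys :: 'a::field list))"
  by (induction ys) (auto simp: inverse_mult_distrib)

lemma norm_prod_list_map:
  "norm (prod_list (map f ys)) = prod_list (map (\<lambda>j. norm (f j :: 'a::real_normed_field)) ys)"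
  by (induction ys) (auto simp: norm_mult)

lemma prod_list_map_of_real:
  "prod_list (map (\<lambda>j. of_real (f j) :: 'a::real_algebra_1) ys) = of_real (prod_list (map f ys))"
  by (induction ys) auto

lemma prod_list_map_mset_eq:
  "mset xs = mset ys \<Longrightarrow> prod_list (map f xs) = prod_list (map f ys :: 'a::comm_monoid_mult list)"
  by (metis mset_map prod_mset_prod_list)

lemma continuous_on_prod_list_map: "continuous_on UNIV (\<lambda>x::nat\<Rightarrow>real. prod_list (map x ys))"
  by (induction ys) (auto intro!: continuous_on_mult continuous_on_product_coordinates)

lemma sum_eq_unit_times_norm_sum_imp_aligned:
  fixes W :: "'a \<Rightarrow> complex"
  assumes fin: "finite S" and u: "cmod u = 1"
    and eq: "sum W S = u * complex_of_real (\<Sum>k\<in>S. cmod (W k))"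
  shows "\<forall>k\<in>S. W k = u * complex_of_real (cmod (W k))"
proof -
  have cu: "u * cnj u = 1" using complex_norm_square[of u] u by simp
  have le: "\<And>k. Re (cnj u * W k) \<le> cmod (W k)"
    using complex_Re_le_cmod by (metis complex_mod_cnj mult_1 norm_mult u)
  have "(\<Sum>k\<in>S. Re (cnj u * W k)) = Re (cnj u * sum W S)"
    by (simp add: sum_distrib_left)
  also have "\<dots> = (\<Sum>k\<in>S. cmod (W k))"
    using eq cu by (simp add: mult.assoc[symmetric] mult.commute[of "cnj u"])
  finally have "(\<Sum>k\<in>S. cmod (W k) - Re (cnj u * W k)) = 0" by (simp add: sum_subtractf)
  then have z: "\<forall>k\<in>S. Re (cnj u * W k) = cmod (W k)"
    using sum_nonneg_eq_0_iff[OF fin, of "\<lambda>k. cmod (W k) - Re (cnj u * W k)"] le by auto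
  show ?thesis
  proof
    fix k assume k: "k \<in> S"
    define c where "c = cnj u * W k"
    have rc: "Re c = cmod c" using z k by (simp add: c_def norm_mult complex_mod_cnj u)
    then have "Im c = 0" using cmod_power2[of c] by simp
    then have "c = complex_of_real (cmod (W k))"
      using rc by (simp add: complex_eq_iff c_def norm_mult complex_mod_cnj u)
    moreover have "u * c = W k" using cu by (simp add: c_def mult.assoc[symmetric])
    ultimately show "W k = u * complex_of_real (cmod (W k))" by simp
  qed
qed

definition phase :: "complex \<Rightarrow> complex" where
  "phase z = z / complex_of_real (cmod z)"

lemma norm_phase: "z \<noteq> 0 \<Longrightarrow> cmod (phase z) = 1"
  by (simp add: phase_def norm_divide)

lemma phase_times_norm: "z = phase z * complex_of_real (cmod z)"
  by (cases "z = 0") (auto simp: phase_def)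

lemma phase_nonzero: "z \<noteq> 0 \<Longrightarrow> phase z \<noteq> 0"
  by (simp add: phase_def)

lemma phase_unit_times_pos: "0 < c \<Longrightarrow> cmod u = 1 \<Longrightarrow> phase (u * complex_of_real c) = u"
  by (simp add: phase_def norm_mult)

lemma phase_pos_real: "0 < c \<Longrightarrow> phase (complex_of_real c) = 1"
  using phase_unit_times_pos[of c 1] by simp

section \<open>Index lists and stabilizing matrices\<close>

lemma tidx_finite: "finite (tidx k n)"
proof -
  have "tidx k n = {xs. set xs \<subseteq> {1..n} \<and> length xs = k}" by (auto simp: tidx_def)
  then show ?thesis using finite_lists_length_eq[of "{1..n}" k] by simp
qed

lemma tidx_memD: "ys \<in> tidx k n \<Longrightarrow> j \<in> set ys \<Longrightarrow> j \<in> {1..n}"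
  by (auto simp: tidx_def)

lemma tidx_length: "ys \<in> tidx k n \<Longrightarrow> length ys = k"
  by (auto simp: tidx_def)

lemma tidx_Cons: "1 \<le> m \<Longrightarrow> i \<in> {1..n} \<Longrightarrow> ys \<in> tidx (m - 1) n \<Longrightarrow> i # ys \<in> tidx m n"
  by (auto simp: tidx_def)

lemma tidx_hd_tl:
  assumes "1 \<le> m" "xs \<in> tidx m n"
  shows "xs = hd xs # tl xs" "hd xs \<in> {1..n}" "tl xs \<in> tidx (m - 1) n"
proof -
  have "xs \<noteq> []" using assms by (auto simp: tidx_def)
  then show "xs = hd xs # tl xs" "hd xs \<in> {1..n}" "tl xs \<in> tidx (m - 1) n"
    using assms(2) by (cases xs; auto simp: tidx_def)+
qed

lemma stab_set_iff:
  assumes "1 \<le> m"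
  shows "d \<in> stab_set m n B \<longleftrightarrow> d \<in> {1..n} \<rightarrow>\<^sub>E (UNIV - {0}) \<and> d 1 = 1 \<and>
     (\<forall>xs\<in>tidx m n. B xs \<noteq> 0 \<longrightarrow> prod_list (map d (tl xs)) = d (hd xs) ^ (m - 1))"
proof -
  have "(complex_of_real (B xs) = inverse (d (hd xs)) ^ (m - 1) * complex_of_real (B xs)
           * prod_list (map d (tl xs)))
     \<longleftrightarrow> (B xs \<noteq> 0 \<longrightarrow> prod_list (map d (tl xs)) = d (hd xs) ^ (m - 1))"
    if d: "d \<in> {1..n} \<rightarrow>\<^sub>E (UNIV - {0})" and xs: "xs \<in> tidx m n" for xs
  proof -
    have "d (hd xs) ^ (m - 1) \<noteq> 0" using d tidx_hd_tl(2)[OF assms xs] by auto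
    then show ?thesis by (auto simp: power_inverse[symmetric] field_simps)
  qed
  then show ?thesis unfolding stab_set_def by auto
qed

lemma stab_set_extensional: "d \<in> stab_set m n B \<Longrightarrow> d \<in> extensional {1..n}"
  by (auto simp: stab_set_def PiE_def)

lemma stab_set_nonzero: "d \<in> stab_set m n B \<Longrightarrow> i \<in> {1..n} \<Longrightarrow> d i \<noteq> 0"
  by (auto simp: stab_set_def PiE_def)

lemma stab_set_mono:
  assumes "1 \<le> m" and "sp_le m n Ahat A"
  shows "stab_set m n A \<subseteq> stab_set m n Ahat"
proof
  fix d assume "d \<in> stab_set m n A"
  then show "d \<in> stab_set m n Ahat"
    using assms(2) unfolding stab_set_iff[OF assms(1)] sp_le_def by blast
qed

lemma stab_set_one:
  assumes "1 \<le> m" and "1 \<le> n"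
  shows "(\<lambda>i\<in>{1..n}. 1) \<in> stab_set m n B"
  unfolding stab_set_iff[OF assms(1)]
proof (intro conjI ballI impI)
  have one: "set ys \<subseteq> {1..n} \<Longrightarrow> prod_list (map (\<lambda>i\<in>{1..n}. 1::complex) ys) = 1" for ys
    by (induction ys) auto
  show "prod_list (map (\<lambda>i\<in>{1..n}. 1::complex) (tl xs)) = (\<lambda>i\<in>{1..n}. 1) (hd xs) ^ (m - 1)"
    if "xs \<in> tidx m n" for xs
  proof -
    have "set (tl xs) \<subseteq> {1..n}" using tidx_memD[OF tidx_hd_tl(3)[OF assms(1) that]] by blast
    from one[OF this] show ?thesis using tidx_hd_tl(2)[OF assms(1) that] by simp
  qed
qed (use assms(2) in auto)

lemma stab_set_mult:
  assumes m: "1 \<le> m" and "1 \<le> n" and d: "d \<in> stab_set m n B" and e: "e \<in> stab_set m n B"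
  shows "(\<lambda>i\<in>{1..n}. d i * e i) \<in> stab_set m n B"
  unfolding stab_set_iff[OF m]
proof (intro conjI ballI impI)
  show "(\<lambda>i\<in>{1..n}. d i * e i) \<in> {1..n} \<rightarrow>\<^sub>E (UNIV - {0})"
    using stab_set_nonzero[OF d] stab_set_nonzero[OF e] by auto
  show "(\<lambda>i\<in>{1..n}. d i * e i) 1 = 1" using assms by (simp add: stab_set_iff)
  fix xs assume xs: "xs \<in> tidx m n" "B xs \<noteq> 0"
  have "prod_list (map (\<lambda>i\<in>{1..n}. d i * e i) (tl xs)) = prod_list (map (\<lambda>i. d i * e i) (tl xs))"
    using tidx_memD[OF tidx_hd_tl(3)[OF m xs(1)]] by (intro arg_cong[where f=prod_list] map_cong) auto
  also have "\<dots> = d (hd xs) ^ (m - 1) * e (hd xs) ^ (m - 1)"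
    using d e xs by (simp add: prod_list_map_mult stab_set_iff[OF m])
  finally show "prod_list (map (\<lambda>i\<in>{1..n}. d i * e i) (tl xs)) = (\<lambda>i\<in>{1..n}. d i * e i) (hd xs) ^ (m - 1)"
    using tidx_hd_tl(2)[OF m xs(1)] by (simp add: power_mult_distrib)
qed

lemma stab_set_inverse:
  assumes m: "1 \<le> m" and "1 \<le> n" and d: "d \<in> stab_set m n B"
  shows "(\<lambda>i\<in>{1..n}. inverse (d i)) \<in> stab_set m n B"
  unfolding stab_set_iff[OF m]
proof (intro conjI ballI impI)
  show "(\<lambda>i\<in>{1..n}. inverse (d i)) \<in> {1..n} \<rightarrow>\<^sub>E (UNIV - {0})"
    using stab_set_nonzero[OF d] by auto
  show "(\<lambda>i\<in>{1..n}. inverse (d i)) 1 = 1" using assms by (simp add: stab_set_iff)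
  fix xs assume xs: "xs \<in> tidx m n" "B xs \<noteq> 0"
  have "prod_list (map (\<lambda>i\<in>{1..n}. inverse (d i)) (tl xs)) = prod_list (map (\<lambda>i. inverse (d i)) (tl xs))"
    using tidx_memD[OF tidx_hd_tl(3)[OF m xs(1)]] by (intro arg_cong[where f=prod_list] map_cong) auto
  also have "\<dots> = inverse (d (hd xs) ^ (m - 1))"
    using d xs by (simp add: prod_list_map_inverse stab_set_iff[OF m])
  finally show "prod_list (map (\<lambda>i\<in>{1..n}. inverse (d i)) (tl xs)) = (\<lambda>i\<in>{1..n}. inverse (d i)) (hd xs) ^ (m - 1)"
    using tidx_hd_tl(2)[OF m xs(1)] by (simp add: power_inverse)
qed

definition stab_group :: "nat \<Rightarrow> nat \<Rightarrow> tensor \<Rightarrow> (nat \<Rightarrow> complex) monoid" where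
  "stab_group m n B = \<lparr>carrier = stab_set m n B, mult = (\<lambda>d e. \<lambda>i\<in>{1..n}. d i * e i),
     one = (\<lambda>i\<in>{1..n}. 1)\<rparr>"

lemma group_stab_group:
  assumes "1 \<le> m" and "1 \<le> n"
  shows "group (stab_group m n B)"
proof (rule groupI)
  fix x y assume "x \<in> carrier (stab_group m n B)" "y \<in> carrier (stab_group m n B)"
  then show "x \<otimes>\<^bsub>stab_group m n B\<^esub> y \<in> carrier (stab_group m n B)"
    using stab_set_mult[OF assms] by (simp add: stab_group_def)
next
  show "\<one>\<^bsub>stab_group m n B\<^esub> \<in> carrier (stab_group m n B)"
    using stab_set_one[OF assms] by (simp add: stab_group_def)
next
  fix x y z
  show "x \<otimes>\<^bsub>stab_group m n B\<^esub> y \<otimes>\<^bsub>stab_group m n B\<^esub> z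
      = x \<otimes>\<^bsub>stab_group m n B\<^esub> (y \<otimes>\<^bsub>stab_group m n B\<^esub> z)"
    by (auto simp: stab_group_def mult.assoc)
next
  fix x assume "x \<in> carrier (stab_group m n B)"
  then show "\<one>\<^bsub>stab_group m n B\<^esub> \<otimes>\<^bsub>stab_group m n B\<^esub> x = x"
    using stab_set_extensional[of x] by (auto simp: stab_group_def extensional_def)
next
  fix x assume x: "x \<in> carrier (stab_group m n B)"
  then show "\<exists>y\<in>carrier (stab_group m n B). y \<otimes>\<^bsub>stab_group m n B\<^esub> x = \<one>\<^bsub>stab_group m n B\<^esub>"
    using stab_set_inverse[OF assms] stab_set_nonzero[of x]
    by (intro bexI[of _ "\<lambda>i\<in>{1..n}. inverse (x i)"]) (auto simp: stab_group_def)
qed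

lemma stab_index_dvd:
  assumes m: "1 \<le> m" and n: "1 \<le> n" and sp: "sp_le m n Ahat A"
  shows "stab_index m n A dvd stab_index m n Ahat"
proof -
  interpret G: group "stab_group m n Ahat" by (rule group_stab_group[OF m n])
  have sub: "stab_set m n A \<subseteq> carrier (stab_group m n Ahat)"
    using stab_set_mono[OF m sp] by (simp add: stab_group_def)
  have "subgroup (stab_set m n A) (stab_group m n Ahat)"
  proof (rule G.subgroupI)
    show "stab_set m n A \<subseteq> carrier (stab_group m n Ahat)" by (rule sub)
    show "stab_set m n A \<noteq> {}" using stab_set_one[OF m n] by blast
  next
    fix a assume a: "a \<in> stab_set m n A"
    have "(\<lambda>i\<in>{1..n}. inverse (a i)) \<otimes>\<^bsub>stab_group m n Ahat\<^esub> a = \<one>\<^bsub>stab_group m n Ahat\<^esub>"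
      using stab_set_nonzero[OF a] by (auto simp: stab_group_def)
    moreover have "(\<lambda>i\<in>{1..n}. inverse (a i)) \<in> carrier (stab_group m n Ahat)"
      using stab_set_inverse[OF m n a] sub by blast
    ultimately have "inv\<^bsub>stab_group m n Ahat\<^esub> a = (\<lambda>i\<in>{1..n}. inverse (a i))"
      using G.inv_equality a sub by blast
    then show "inv\<^bsub>stab_group m n Ahat\<^esub> a \<in> stab_set m n A"
      using stab_set_inverse[OF m n a] by simp
  next
    fix a b assume "a \<in> stab_set m n A" "b \<in> stab_set m n A"
    then show "a \<otimes>\<^bsub>stab_group m n Ahat\<^esub> b \<in> stab_set m n A"
      using stab_set_mult[OF m n] by (simp add: stab_group_def)
  qed
  then have "card (rcosets\<^bsub>stab_group m n Ahat\<^esub> stab_set m n A) * card (stab_set m n A)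
      = order (stab_group m n Ahat)"
    by (rule G.lagrange)
  moreover have "order (stab_group m n Ahat) = stab_index m n Ahat"
    by (simp add: order_def stab_group_def stab_index_def)
  ultimately show ?thesis unfolding stab_index_def by (metis dvd_triv_right)
qed

section \<open>The module PS_0\<close>

lemma sum_mult_mod_eq: "(\<Sum>j\<in>S. c j * (f j mod m)) mod m = (\<Sum>j\<in>S. c j * f j) mod (m::nat)"
proof -
  have "(\<Sum>j\<in>S. c j * (f j mod m)) mod m = (\<Sum>j\<in>S. c j * (f j mod m) mod m) mod m"
    by (rule mod_sum_eq[symmetric])
  also have "\<dots> = (\<Sum>j\<in>S. c j * f j mod m) mod m" by (simp add: mod_mult_right_eq)
  also have "\<dots> = (\<Sum>j\<in>S. c j * f j) mod m" by (rule mod_sum_eq)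
  finally show ?thesis .
qed

lemma PS0_add:
  assumes "1 \<le> m" "1 \<le> n" "x \<in> PS0 m n A" "y \<in> PS0 m n A"
  shows "(\<lambda>i\<in>{1..n}. (x i + y i) mod m) \<in> PS0 m n A"
proof -
  have "(\<Sum>j = 1..n. incidence e j * (\<lambda>i\<in>{1..n}. (x i + y i) mod m) j) mod m = 0"
    if e: "e \<in> edge_set m n A" for e
  proof -
    have "(\<Sum>j = 1..n. incidence e j * (\<lambda>i\<in>{1..n}. (x i + y i) mod m) j) mod m
        = (\<Sum>j = 1..n. incidence e j * (x j + y j)) mod m"
      by (simp add: sum_mult_mod_eq)
    also have "\<dots> = ((\<Sum>j = 1..n. incidence e j * x j) mod m + (\<Sum>j = 1..n. incidence e j * y j) mod m) mod m"
      by (simp add: distrib_left sum.distrib mod_add_eq)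
    finally show ?thesis using assms e by (simp add: PS0_def)
  qed
  then show ?thesis using assms by (auto simp: PS0_def zm_vectors_def)
qed

lemma PS0_scale:
  assumes "1 \<le> m" "1 \<le> n" "x \<in> PS0 m n A"
  shows "(\<lambda>i\<in>{1..n}. (k * x i) mod m) \<in> PS0 m n A"
proof -
  have "(\<Sum>j = 1..n. incidence e j * (\<lambda>i\<in>{1..n}. (k * x i) mod m) j) mod m = 0"
    if e: "e \<in> edge_set m n A" for e
  proof -
    have "(\<Sum>j = 1..n. incidence e j * (\<lambda>i\<in>{1..n}. (k * x i) mod m) j) mod m
        = (k * ((\<Sum>j = 1..n. incidence e j * x j) mod m)) mod m"
      by (simp add: sum_mult_mod_eq sum_distrib_left mult.left_commute mod_mult_right_eq)
    then show ?thesis using assms e by (simp add: PS0_def)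
  qed
  then show ?thesis using assms by (auto simp: PS0_def zm_vectors_def)
qed

lemma PS0_zm_submodule:
  assumes "1 \<le> m" and "1 \<le> n" and "sp_le m n Ahat A"
  shows "zm_submodule m n (PS0 m n A) (PS0 m n Ahat)"
proof -
  have "edge_set m n Ahat \<subseteq> edge_set m n A" using assms(3) by (auto simp: edge_set_def sp_le_def)
  then have "PS0 m n A \<subseteq> PS0 m n Ahat" by (auto simp: PS0_def)
  moreover have "(\<lambda>i\<in>{1..n}. 0) \<in> PS0 m n A" using assms by (auto simp: PS0_def zm_vectors_def)
  ultimately show ?thesis
    using PS0_add[OF assms(1,2)] PS0_scale[OF assms(1,2)] by (auto simp: zm_submodule_def PS0_def)
qed

section \<open>Perron--Frobenius theory of weakly irreducible tensors\<close>

lemma rtrancl_leaves_set: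
  assumes "(a, b) \<in> R\<^sup>*" "a \<in> S" "b \<notin> S"
  obtains x y where "(x, y) \<in> R" "x \<in> S" "y \<notin> S"
  using assms by (induction rule: rtrancl_induct) auto

lemma compact_pointwise_box:
  fixes S :: "nat \<Rightarrow> real set"
  assumes "\<And>i. compact (S i)"
  shows "compact {x::nat\<Rightarrow>real. \<forall>i. x i \<in> S i}"
proof -
  have "{x::nat\<Rightarrow>real. \<forall>i. x i \<in> S i} = PiE UNIV S" by (auto simp: PiE_def Pi_def)
  moreover have "compactin (product_topology (\<lambda>i. euclidean) UNIV) (PiE UNIV S)"
    using assms by (simp add: compactin_PiE)
  ultimately show ?thesis by (simp add: euclidean_product_topology)
qed

lemma closed_Collect_const_imp: "closed {x. Q x} \<Longrightarrow> closed {x. P \<longrightarrow> Q x}"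
  by (cases P) auto

lemma closed_Collect_ball: "(\<And>a. a \<in> I \<Longrightarrow> closed {x. Q a x}) \<Longrightarrow> closed {x. \<forall>a\<in>I. Q a x}"
proof -
  assume "\<And>a. a \<in> I \<Longrightarrow> closed {x. Q a x}"
  moreover have "{x. \<forall>a\<in>I. Q a x} = (\<Inter>a\<in>I. {x. Q a x})" by auto
  ultimately show ?thesis by (simp add: closed_INT)
qed

locale pf_tensor =
  fixes m n :: nat and A :: tensor
  assumes order_ge2: "2 \<le> m" and dim_pos: "1 \<le> n" and nonneg: "nonneg_tensor m n A"
    and comb_sym: "comb_symmetric m n A" and weakly_irr: "weakly_irreducible m n A"
begin

lemma order_pos: "1 \<le> m"
  using order_ge2 by simp

definition tensor_apply_real :: "(nat \<Rightarrow> real) \<Rightarrow> nat \<Rightarrow> real" where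
  "tensor_apply_real x i = (\<Sum>ys\<in>tidx (m - 1) n. A (i # ys) * prod_list (map x ys))"

lemma entry_nonneg: "xs \<in> tidx m n \<Longrightarrow> 0 \<le> A xs"
  using nonneg by (auto simp: nonneg_tensor_def)

lemma entry_Cons_nonneg: "i \<in> {1..n} \<Longrightarrow> ys \<in> tidx (m - 1) n \<Longrightarrow> 0 \<le> A (i # ys)"
  using entry_nonneg tidx_Cons[OF order_pos] by blast

lemma support_rotate:
  assumes xs: "xs \<in> tidx m n" and nz: "A xs \<noteq> 0" and l: "l \<in> set xs"
  shows "remove1 l xs \<in> tidx (m - 1) n" "l # remove1 l xs \<in> tidx m n"
    "A (l # remove1 l xs) \<noteq> 0" "mset (l # remove1 l xs) = mset xs"
proof -
  show ms: "mset (l # remove1 l xs) = mset xs" using l by (simp add: insert_DiffM)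
  show "remove1 l xs \<in> tidx (m - 1) n"
    using xs l set_remove1_subset[of l xs] by (auto simp: tidx_def length_remove1)
  then show xs': "l # remove1 l xs \<in> tidx m n"
    using l xs tidx_memD by (intro tidx_Cons[OF order_pos]) auto
  show "A (l # remove1 l xs) \<noteq> 0" using comb_sym xs xs' ms nz unfolding comb_symmetric_def by metis
qed

lemma tensor_digraph_arcE:
  assumes "(i, j) \<in> tensor_digraph m n A"
  obtains ys where "i \<in> {1..n}" "ys \<in> tidx (m - 1) n" "A (i # ys) \<noteq> 0" "j \<in> set ys"
proof -
  obtain xs where xs: "xs \<in> tidx m n" "A xs \<noteq> 0" "hd xs = i" "j \<in> set (tl xs)"
    using assms by (auto simp: tensor_digraph_def)
  then show ?thesis using that[of "tl xs"] tidx_hd_tl[OF order_pos xs(1)] by metis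
qed

lemma tensor_digraph_path: "i \<in> {1..n} \<Longrightarrow> j \<in> {1..n} \<Longrightarrow> (i, j) \<in> (tensor_digraph m n A)\<^sup>*"
  using weakly_irr by (auto simp: weakly_irreducible_def)

lemma support_arc_leaving:
  assumes "S \<subseteq> {1..n}" "k \<in> S" "j \<in> {1..n}" "j \<notin> S"
  obtains a ys b where "a \<in> S" "ys \<in> tidx (m - 1) n" "A (a # ys) \<noteq> 0" "b \<in> set ys" "b \<in> {1..n} - S"
proof -
  obtain a b where ab: "(a, b) \<in> tensor_digraph m n A" "a \<in> S" "b \<notin> S"
    using rtrancl_leaves_set[OF tensor_digraph_path[of k j]] assms by blast
  obtain ys where "ys \<in> tidx (m - 1) n" "A (a # ys) \<noteq> 0" "b \<in> set ys"
    using tensor_digraph_arcE[OF ab(1)] by blast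
  then show ?thesis using that ab tidx_memD by blast
qed

lemma tensor_apply_real_cong:
  "(\<And>j. j \<in> {1..n} \<Longrightarrow> x j = y j) \<Longrightarrow> tensor_apply_real x i = tensor_apply_real y i"
  unfolding tensor_apply_real_def
  by (intro sum.cong refl arg_cong2[where f="(*)"] arg_cong[where f=prod_list] map_cong)
     (auto dest: tidx_memD)

lemma tensor_apply_real_nonneg:
  "(\<And>j. j \<in> {1..n} \<Longrightarrow> 0 \<le> x j) \<Longrightarrow> i \<in> {1..n} \<Longrightarrow> 0 \<le> tensor_apply_real x i"
  unfolding tensor_apply_real_def
  by (intro sum_nonneg mult_nonneg_nonneg entry_Cons_nonneg prod_list_nonneg) (auto dest: tidx_memD)

lemma tensor_apply_real_mono:
  "(\<And>j. j \<in> {1..n} \<Longrightarrow> 0 \<le> x j \<and> x j \<le> y j) \<Longrightarrow> i \<in> {1..n} \<Longrightarrow>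
   tensor_apply_real x i \<le> tensor_apply_real y i"
  unfolding tensor_apply_real_def
  by (intro sum_mono mult_left_mono entry_Cons_nonneg prod_list_map_mono) (auto dest: tidx_memD)

lemma tensor_apply_real_const_mult:
  "tensor_apply_real (\<lambda>j. t * x j) i = t ^ (m - 1) * tensor_apply_real x i"
  unfolding tensor_apply_real_def sum_distrib_left
  by (intro sum.cong refl) (auto simp: prod_list_map_const_mult tidx_length)

lemma tensor_apply_real_term_le:
  "(\<And>j. j \<in> {1..n} \<Longrightarrow> 0 \<le> x j) \<Longrightarrow> i \<in> {1..n} \<Longrightarrow> ys \<in> tidx (m - 1) n \<Longrightarrow>
   A (i # ys) * prod_list (map x ys) \<le> tensor_apply_real x i"
  unfolding tensor_apply_real_def
  by (rule member_le_sum[where f="\<lambda>ys. A (i # ys) * prod_list (map x ys)", OF _ _ tidx_finite])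
     (auto intro!: mult_nonneg_nonneg entry_Cons_nonneg prod_list_nonneg simp: tidx_def subset_iff)

lemma tensor_apply_real_strict_mono:
  assumes "\<And>j. j \<in> {1..n} \<Longrightarrow> 0 \<le> x j \<and> x j \<le> y j \<and> 0 < y j" and "i \<in> {1..n}"
    and "ys \<in> tidx (m - 1) n" "A (i # ys) \<noteq> 0" "j0 \<in> set ys" "x j0 < y j0"
  shows "tensor_apply_real x i < tensor_apply_real y i"
  unfolding tensor_apply_real_def
proof (rule sum_strict_mono_ex1[OF tidx_finite])
  show "\<forall>zs\<in>tidx (m - 1) n. A (i # zs) * prod_list (map x zs) \<le> A (i # zs) * prod_list (map y zs)"
    using assms by (auto intro!: mult_left_mono entry_Cons_nonneg prod_list_map_mono dest: tidx_memD)
  have "0 < A (i # ys)" using entry_Cons_nonneg[OF assms(2,3)] assms(4) by simp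
  moreover have "prod_list (map x ys) < prod_list (map y ys)"
    using assms by (intro prod_list_map_strict_mono) (auto dest: tidx_memD)
  ultimately show "\<exists>zs\<in>tidx (m - 1) n. A (i # zs) * prod_list (map x zs) < A (i # zs) * prod_list (map y zs)"
    using assms(3) by (intro bexI[of _ ys]) auto
qed

lemma tensor_apply_of_real:
  "tensor_apply m n A (\<lambda>j. complex_of_real (x j)) i = complex_of_real (tensor_apply_real x i)"
  unfolding tensor_apply_def tensor_apply_real_def by (simp add: prod_list_map_of_real)

lemma norm_tensor_apply_le:
  "i \<in> {1..n} \<Longrightarrow> norm (tensor_apply m n A y i) \<le> tensor_apply_real (\<lambda>j. norm (y j)) i"
  unfolding tensor_apply_def tensor_apply_real_def
  by (rule order_trans[OF norm_sum], intro sum_mono)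
     (use entry_Cons_nonneg in \<open>auto simp: norm_mult norm_prod_list_map\<close>)

lemma continuous_on_tensor_apply_real: "continuous_on UNIV (\<lambda>x. tensor_apply_real x i)"
  unfolding tensor_apply_real_def
  by (intro continuous_on_sum continuous_on_mult continuous_on_const continuous_on_prod_list_map)

definition min_pos_entry :: real where
  "min_pos_entry = (if {A xs | xs. xs \<in> tidx m n \<and> A xs \<noteq> 0} = {} then 1
     else Min {A xs | xs. xs \<in> tidx m n \<and> A xs \<noteq> 0})"

lemma min_pos_entry_pos: "0 < min_pos_entry"
proof (cases "{A xs | xs. xs \<in> tidx m n \<and> A xs \<noteq> 0} = {}")
  case False
  have "finite {A xs | xs. xs \<in> tidx m n \<and> A xs \<noteq> 0}" using tidx_finite[of m n] by simp
  moreover have "\<forall>a\<in>{A xs | xs. xs \<in> tidx m n \<and> A xs \<noteq> 0}. 0 < a"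
    using entry_nonneg by (auto simp: order_le_less)
  ultimately show ?thesis using False Min_in unfolding min_pos_entry_def by auto
qed (simp add: min_pos_entry_def)

lemma min_pos_entry_le: "xs \<in> tidx m n \<Longrightarrow> A xs \<noteq> 0 \<Longrightarrow> min_pos_entry \<le> A xs"
  unfolding min_pos_entry_def using tidx_finite[of m n] by (auto intro!: Min_le)

definition entry_sum_bound :: real where
  "entry_sum_bound = 1 + (\<Sum>i\<in>{1..n}. \<Sum>ys\<in>tidx (m - 1) n. A (i # ys))"

lemma entry_sum_bound_ge1: "1 \<le> entry_sum_bound"
  unfolding entry_sum_bound_def by (auto intro!: sum_nonneg entry_Cons_nonneg)

lemma tensor_apply_real_one_le:
  assumes "i \<in> {1..n}"
  shows "tensor_apply_real (\<lambda>_. 1) i \<le> entry_sum_bound"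
proof -
  have "tensor_apply_real (\<lambda>_. 1) i = (\<Sum>ys\<in>tidx (m - 1) n. A (i # ys))"
    unfolding tensor_apply_real_def by (simp add: map_replicate_const)
  also have "\<dots> \<le> (\<Sum>i\<in>{1..n}. \<Sum>ys\<in>tidx (m - 1) n. A (i # ys))"
    using assms by (intro member_le_sum sum_nonneg entry_Cons_nonneg) auto
  finally show ?thesis unfolding entry_sum_bound_def by simp
qed

definition spread :: real where
  "spread = min 1 (min_pos_entry / entry_sum_bound)"

lemma spread_pos: "0 < spread" and spread_le1: "spread \<le> 1"
  using min_pos_entry_pos entry_sum_bound_ge1 by (auto simp: spread_def)

text \<open>Along a nonzero entry of A, the coordinates of a positive vector x with
  A x^{m-1} \<le> r x^{[m-1]} cannot differ by more than the factor spread: put the smallest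
  coordinate x_l of the entry in front (combinatorial symmetry) and compare
  min_pos_entry * x_u * x_l^{m-2} with r x_l^{m-1}.\<close>
lemma support_ratio_bound:
  assumes pos: "\<And>j. j \<in> {1..n} \<Longrightarrow> 0 < x j"
    and r: "r \<le> entry_sum_bound" and sub: "\<And>i. i \<in> {1..n} \<Longrightarrow> tensor_apply_real x i \<le> r * x i ^ (m - 1)"
    and xs: "xs \<in> tidx m n" "A xs \<noteq> 0" and u: "u \<in> set xs" and w: "w \<in> set xs"
  shows "spread * x u \<le> x w"
proof -
  have fin: "finite (x ` set xs)" "x ` set xs \<noteq> {}" using u by auto
  obtain l where l: "l \<in> set xs" "x l = Min (x ` set xs)" using Min_in[OF fin] by auto
  have lmin: "\<And>v. v \<in> set xs \<Longrightarrow> x l \<le> x v" using l fin by auto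
  have inn: "\<And>v. v \<in> set xs \<Longrightarrow> v \<in> {1..n}" using xs(1) tidx_memD by blast
  have xl: "0 < x l" and xu: "0 < x u" using pos inn l(1) u by blast+
  have "spread * x u \<le> x l"
  proof (cases "u = l")
    case True then show ?thesis using spread_le1 xu by (simp add: mult_le_cancel_right1)
  next
    case False
    define ys where "ys = remove1 l xs"
    have ys: "ys \<in> tidx (m - 1) n" "A (l # ys) \<noteq> 0" using support_rotate[OF xs l(1)] by (auto simp: ys_def)
    have uy: "u \<in> set ys" using False u by (simp add: ys_def)
    have "\<And>v. v \<in> set ys \<Longrightarrow> x l \<le> x v" using lmin set_remove1_subset[of l xs] by (auto simp: ys_def)
    then have "x u * x l ^ (length ys - 1) \<le> prod_list (map x ys)"
      using prod_list_map_ge_one_factor[of ys "x l" x u] xl uy by auto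
    then have p: "x u * x l ^ (m - 2) \<le> prod_list (map x ys)"
      using tidx_length[OF ys(1)] by (simp add: diff_diff_add numeral_2_eq_2)
    have lin: "l \<in> {1..n}" using inn l by auto
    have "min_pos_entry * (x u * x l ^ (m - 2)) \<le> A (l # ys) * prod_list (map x ys)"
      using p xl xu min_pos_entry_le[OF support_rotate(2,3)[OF xs l(1)]] min_pos_entry_pos
      by (intro mult_mono) (auto simp: ys_def)
    also have "\<dots> \<le> tensor_apply_real x l"
      using tensor_apply_real_term_le[OF _ lin ys(1)] pos by (simp add: less_imp_le)
    also have "\<dots> \<le> r * x l ^ (m - 1)" using sub lin by auto
    also have "x l ^ (m - 1) = x l * x l ^ (m - 2)"
    proof -
      have "m - 1 = Suc (m - 2)" using order_ge2 by arith
      then show ?thesis by simp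
    qed
    finally have "min_pos_entry * x u * x l ^ (m - 2) \<le> (r * x l) * x l ^ (m - 2)"
      by (simp only: mult.assoc mult.left_commute)
    then have "min_pos_entry * x u \<le> r * x l" using xl by (simp add: mult_le_cancel_right)
    also have "\<dots> \<le> entry_sum_bound * x l" using r xl by (simp add: mult_right_mono)
    finally have "min_pos_entry / entry_sum_bound * x u \<le> x l"
      using entry_sum_bound_ge1 by (simp add: field_simps)
    moreover have "spread * x u \<le> min_pos_entry / entry_sum_bound * x u"
      using xu by (intro mult_right_mono) (auto simp: spread_def)
    ultimately show ?thesis by linarith
  qed
  then show ?thesis using lmin[OF w] by linarith
qed

text \<open>Scaling down all coordinates where the inequality A z^{m-1} \<le> r z^{[m-1]} is already
  strict keeps them strict and, through an arc leaving the set E of equality coordinates,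
  makes at least one coordinate of E strict.\<close>
lemma strict_subeigen_step:
  assumes pos: "\<And>j. j \<in> {1..n} \<Longrightarrow> 0 < z j"
    and le: "\<And>i. i \<in> {1..n} \<Longrightarrow> tensor_apply_real z i \<le> r * z i ^ (m - 1)"
    and st: "i0 \<in> {1..n}" "tensor_apply_real z i0 < r * z i0 ^ (m - 1)"
    and E: "E = {i \<in> {1..n}. \<not> tensor_apply_real z i < r * z i ^ (m - 1)}" and Ene: "E \<noteq> {}"
  shows "\<exists>y. (\<forall>j\<in>{1..n}. 0 < y j) \<and> (\<forall>i\<in>{1..n}. tensor_apply_real y i \<le> r * y i ^ (m - 1))
     \<and> {i \<in> {1..n}. \<not> tensor_apply_real y i < r * y i ^ (m - 1)} \<subset> E"
proof -
  define T where "T = {1..n} - E"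
  have i0T: "i0 \<in> T" using st by (simp add: T_def E)
  have zpow: "\<And>i. i \<in> {1..n} \<Longrightarrow> 0 < z i ^ (m - 1)" using pos by simp
  have tpnn: "\<And>i. i \<in> {1..n} \<Longrightarrow> 0 \<le> tensor_apply_real z i"
    using pos by (intro tensor_apply_real_nonneg) (auto simp: less_imp_le)
  have rpos: "0 < r"
  proof -
    have "0 < r * z i0 ^ (m - 1)" using tpnn[OF st(1)] st(2) by linarith
    then show ?thesis by (rule zero_less_mult_pos2[OF _ zpow[OF st(1)]])
  qed
  define qf where "qf i = tensor_apply_real z i / (r * z i ^ (m - 1))" for i
  define qm where "qm = Max (qf ` T)"
  have Tfin: "finite T" by (simp add: T_def)
  have qf_le: "\<And>i. i \<in> T \<Longrightarrow> qf i \<le> qm" using Tfin by (auto simp: qm_def)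
  have qf_lt: "\<And>i. i \<in> T \<Longrightarrow> qf i < 1"
    using zpow rpos by (auto simp: qf_def T_def E divide_less_eq)
  have qm_lt: "qm < 1" unfolding qm_def using qf_lt Tfin i0T by (subst Max_less_iff) auto
  have qm_nn: "0 \<le> qm"
  proof -
    have "0 \<le> qf i0" using tpnn[OF st(1)] rpos zpow[OF st(1)] by (simp add: qf_def)
    then show ?thesis using qf_le[OF i0T] by linarith
  qed
  define c where "c = (1 + qm) / 2"
  have c: "qm < c" "c < 1" using qm_lt qm_nn by (auto simp: c_def)
  define s where "s = root (m - 1) c"
  have s: "s ^ (m - 1) = c" "0 < s" "s < 1" using c qm_nn order_ge2
    by (auto simp: s_def real_root_pow_pos2 real_root_lt_1_iff)
  define y where "y j = (if j \<in> T then s * z j else z j)" for j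
  have ypos: "\<And>j. j \<in> {1..n} \<Longrightarrow> 0 < y j" using pos s by (auto simp: y_def)
  have ylez: "\<And>j. j \<in> {1..n} \<Longrightarrow> 0 \<le> y j \<and> y j \<le> z j \<and> 0 < z j"
    using pos s ypos by (auto simp: y_def less_imp_le mult_le_cancel_right1)
  have tpyz: "\<And>i. i \<in> {1..n} \<Longrightarrow> tensor_apply_real y i \<le> tensor_apply_real z i"
    using ylez by (intro tensor_apply_real_mono) auto
  have Tstrict: "tensor_apply_real y i < r * y i ^ (m - 1)" if iT: "i \<in> T" for i
  proof -
    have i: "i \<in> {1..n}" using iT by (simp add: T_def)
    have "r * z i ^ (m - 1) \<noteq> 0" using mult_pos_pos[OF rpos zpow[OF i]] by linarith
    then have "tensor_apply_real z i = qf i * (r * z i ^ (m - 1))" unfolding qf_def by simp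
    also have "\<dots> \<le> qm * (r * z i ^ (m - 1))"
      using qf_le[OF iT] rpos zpow[OF i] by (intro mult_right_mono) auto
    also have "\<dots> < c * (r * z i ^ (m - 1))"
      using c rpos zpow[OF i] by (intro mult_strict_right_mono) auto
    also have "\<dots> = r * y i ^ (m - 1)" using iT s by (simp add: y_def power_mult_distrib)
    finally show ?thesis using tpyz[OF i] by linarith
  qed
  have yle: "\<forall>i\<in>{1..n}. tensor_apply_real y i \<le> r * y i ^ (m - 1)"
  proof
    fix i assume i: "i \<in> {1..n}"
    show "tensor_apply_real y i \<le> r * y i ^ (m - 1)"
    proof (cases "i \<in> T")
      case True then show ?thesis using Tstrict[of i] by simp
    next
      case False then show ?thesis using tpyz[OF i] le[OF i] by (simp add: y_def)
    qed
  qed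
  obtain a ys b where ab: "a \<in> E" "ys \<in> tidx (m - 1) n" "A (a # ys) \<noteq> 0" "b \<in> set ys" "b \<in> T"
    using support_arc_leaving[of E _ i0] Ene st i0T unfolding E T_def by blast
  have a: "a \<in> {1..n}" using ab(1) by (simp add: E)
  have "tensor_apply_real y a < tensor_apply_real z a"
    using ab ylez s pos[of b] by (intro tensor_apply_real_strict_mono[OF _ a ab(2,3,4)]) (auto simp: y_def T_def)
  also have "\<dots> \<le> r * y a ^ (m - 1)" using le a ab(1) by (simp add: y_def T_def)
  finally have "{i \<in> {1..n}. \<not> tensor_apply_real y i < r * y i ^ (m - 1)} \<subset> E"
    using Tstrict ab(1) by (auto simp: T_def)
  then show ?thesis using ypos yle by blast
qed

lemma strict_subeigen:
  assumes "\<And>j. j \<in> {1..n} \<Longrightarrow> 0 < z j"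
    and "\<And>i. i \<in> {1..n} \<Longrightarrow> tensor_apply_real z i \<le> r * z i ^ (m - 1)"
    and "i0 \<in> {1..n}" "tensor_apply_real z i0 < r * z i0 ^ (m - 1)"
  shows "\<exists>y. (\<forall>j\<in>{1..n}. 0 < y j) \<and> (\<forall>i\<in>{1..n}. tensor_apply_real y i < r * y i ^ (m - 1))"
  using assms
proof (induction "card {i \<in> {1..n}. \<not> tensor_apply_real z i < r * z i ^ (m - 1)}"
    arbitrary: z rule: less_induct)
  case less
  define E where "E = {i \<in> {1..n}. \<not> tensor_apply_real z i < r * z i ^ (m - 1)}"
  show ?case
  proof (cases "E = {}")
    case True
    then show ?thesis using less.prems by (intro exI[of _ z]) (auto simp: E_def)
  next
    case False
    obtain y where y: "\<forall>j\<in>{1..n}. 0 < y j" "\<forall>i\<in>{1..n}. tensor_apply_real y i \<le> r * y i ^ (m - 1)"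
      "{i \<in> {1..n}. \<not> tensor_apply_real y i < r * y i ^ (m - 1)} \<subset> E"
      using strict_subeigen_step[OF less.prems E_def False] by blast
    have "card {i \<in> {1..n}. \<not> tensor_apply_real y i < r * y i ^ (m - 1)} < card E"
      using y(3) by (intro psubset_card_mono) (auto simp: E_def)
    moreover have "tensor_apply_real y i0 < r * y i0 ^ (m - 1)"
      using y(3) less.prems(3,4) by (auto simp: E_def)
    ultimately show ?thesis using less.hyps[of y] y less.prems(3) by (auto simp: E_def)
  qed
qed

lemma supereigen_is_multiple:
  assumes v: "\<And>j. j \<in> {1..n} \<Longrightarrow> 0 < v j"
    and ev: "\<And>i. i \<in> {1..n} \<Longrightarrow> tensor_apply_real v i = r * v i ^ (m - 1)"
    and w: "\<And>j. j \<in> {1..n} \<Longrightarrow> 0 \<le> w j"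
    and sup: "\<And>i. i \<in> {1..n} \<Longrightarrow> r * w i ^ (m - 1) \<le> tensor_apply_real w i"
  shows "\<exists>t\<ge>0. \<forall>j\<in>{1..n}. w j = t * v j"
proof -
  define t where "t = Max ((\<lambda>j. w j / v j) ` {1..n})"
  have fin: "finite ((\<lambda>j. w j / v j) ` {1..n})" "(\<lambda>j. w j / v j) ` {1..n} \<noteq> {}" using dim_pos by auto
  obtain k where k: "k \<in> {1..n}" "w k / v k = t" using Max_in[OF fin] by (auto simp: t_def)
  have tge: "w j \<le> t * v j" if j: "j \<in> {1..n}" for j
  proof -
    have "w j / v j \<le> t" using fin j by (auto simp: t_def)
    then show ?thesis using v[OF j] by (simp add: divide_le_eq)
  qed
  have t0: "0 \<le> t" using k w[of k] v[of k] by auto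
  show ?thesis
  proof (cases "t = 0")
    case True
    then show ?thesis using tge w by (intro exI[of _ 0]) (auto intro: antisym)
  next
    case False
    then have tpos: "0 < t" using t0 by simp
    define S where "S = {j \<in> {1..n}. w j = t * v j}"
    have "S = {1..n}"
    proof (rule ccontr)
      assume "S \<noteq> {1..n}"
      moreover have SS: "S \<subseteq> {1..n}" by (auto simp: S_def)
      ultimately obtain j where j: "j \<in> {1..n}" "j \<notin> S" by blast
      have "k \<in> S" using k v[of k] by (auto simp: S_def field_simps)
      then obtain a ys b where ab: "a \<in> S" "ys \<in> tidx (m - 1) n" "A (a # ys) \<noteq> 0"
          "b \<in> set ys" "b \<in> {1..n} - S"
        using support_arc_leaving[OF SS _ j] by blast
      have a: "a \<in> {1..n}" using ab(1) by (simp add: S_def)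
      have "tensor_apply_real w a < tensor_apply_real (\<lambda>j. t * v j) a"
        using tge w v tpos ab by (intro tensor_apply_real_strict_mono[OF _ a ab(2,3,4)])
          (auto simp: S_def order_le_less)
      also have "\<dots> = r * w a ^ (m - 1)"
        using ev[OF a] ab(1) by (simp add: tensor_apply_real_const_mult power_mult_distrib S_def)
      finally show False using sup[OF a] by simp
    qed
    then show ?thesis using t0 by (intro exI[of _ t]) (auto simp: S_def)
  qed
qed

text \<open>Candidates store a ratio r in coordinate 0 and a vector x with coordinate sum 1 in
  coordinates 1..n, subject to A x^{m-1} \<le> r x^{[m-1]}; the spread condition is closed and
  forces candidates to be positive. A candidate minimizing r is a Perron eigenpair
  (Collatz--Wielandt).\<close>
definition pf_candidates :: "(nat \<Rightarrow> real) set" where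
  "pf_candidates = {x.
      (\<forall>i. x i \<in> (if i = 0 then {0..entry_sum_bound} else if i \<le> n then {0..1} else {0}))
      \<and> (\<Sum>i\<in>{1..n}. x i) = 1
      \<and> (\<forall>xs\<in>tidx m n. A xs \<noteq> 0 \<longrightarrow> (\<forall>u\<in>set xs. \<forall>w\<in>set xs. spread * x u \<le> x w))
      \<and> (\<forall>i\<in>{1..n}. tensor_apply_real x i \<le> x 0 * x i ^ (m - 1))}"

lemma compact_pf_candidates: "compact pf_candidates"
proof -
  have "pf_candidates =
      {x. \<forall>i. x i \<in> (if i = 0 then {0..entry_sum_bound} else if i \<le> n then {0..1} else {0})} \<inter>
     ({x. (\<Sum>i\<in>{1..n}. x i) = 1} \<inter>
      ({x. \<forall>xs\<in>tidx m n. A xs \<noteq> 0 \<longrightarrow> (\<forall>u\<in>set xs. \<forall>w\<in>set xs. spread * x u \<le> x w)} \<inter>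
       {x. \<forall>i\<in>{1..n}. tensor_apply_real x i \<le> x 0 * x i ^ (m - 1)}))"
    unfolding pf_candidates_def by blast
  also have "compact \<dots>"
    by (intro compact_Int_closed closed_Int compact_pointwise_box closed_Collect_eq closed_Collect_ball
        closed_Collect_const_imp closed_Collect_le continuous_on_mult continuous_on_power
        continuous_on_sum continuous_on_tensor_apply_real continuous_on_product_coordinates
        continuous_on_const) auto
  finally show ?thesis .
qed

lemma pf_candidates_nonempty: "pf_candidates \<noteq> {}"
proof -
  define x where "x i = (if i = 0 then entry_sum_bound else if i \<le> n then 1 / real n else 0)" for i
  have np: "0 < real n" using dim_pos by simp
  have "\<forall>i. x i \<in> (if i = 0 then {0..entry_sum_bound} else if i \<le> n then {0..1} else {0})"
    using entry_sum_bound_ge1 dim_pos by (auto simp: x_def)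
  moreover have "(\<Sum>i\<in>{1..n}. x i) = 1" using np by (simp add: x_def)
  moreover have "\<forall>xs\<in>tidx m n. A xs \<noteq> 0 \<longrightarrow> (\<forall>u\<in>set xs. \<forall>w\<in>set xs. spread * x u \<le> x w)"
  proof (intro ballI impI)
    fix xs u w assume "xs \<in> tidx m n" "u \<in> set xs" "w \<in> set xs"
    then have "u \<in> {1..n}" "w \<in> {1..n}" using tidx_memD by auto
    then show "spread * x u \<le> x w" using spread_le1 np by (simp add: x_def divide_right_mono)
  qed
  moreover have "\<forall>i\<in>{1..n}. tensor_apply_real x i \<le> x 0 * x i ^ (m - 1)"
  proof
    fix i assume i: "i \<in> {1..n}"
    have "tensor_apply_real x i = tensor_apply_real (\<lambda>j. (1 / real n) * 1) i"
      by (rule tensor_apply_real_cong) (auto simp: x_def)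
    also have "\<dots> = (1 / real n) ^ (m - 1) * tensor_apply_real (\<lambda>_. 1) i"
      by (rule tensor_apply_real_const_mult)
    also have "\<dots> \<le> (1 / real n) ^ (m - 1) * entry_sum_bound"
      using tensor_apply_real_one_le[OF i] by (intro mult_left_mono) auto
    finally show "tensor_apply_real x i \<le> x 0 * x i ^ (m - 1)" using i by (simp add: x_def mult.commute)
  qed
  ultimately have "x \<in> pf_candidates" unfolding pf_candidates_def by blast
  then show ?thesis by blast
qed

lemma pf_candidate_pos:
  assumes z: "z \<in> pf_candidates" and j: "j \<in> {1..n}"
  shows "0 < z j"
proof -
  have "\<exists>i0\<in>{1..n}. 0 < z i0"
  proof (rule ccontr)
    assume "\<not> (\<exists>i0\<in>{1..n}. 0 < z i0)"
    then have "(\<Sum>i\<in>{1..n}. z i) \<le> 0" by (intro sum_nonpos) (auto simp: not_less)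
    then show False using z by (simp add: pf_candidates_def)
  qed
  then obtain i0 where i0: "i0 \<in> {1..n}" "0 < z i0" by blast
  from tensor_digraph_path[OF i0(1) j] show ?thesis
  proof (induction rule: rtrancl_induct)
    case (step b c)
    obtain ys where ys: "b \<in> {1..n}" "ys \<in> tidx (m - 1) n" "A (b # ys) \<noteq> 0" "c \<in> set ys"
      using tensor_digraph_arcE[OF step(2)] by blast
    then have "spread * z b \<le> z c"
      using z tidx_Cons[OF order_pos ys(1,2)] unfolding pf_candidates_def by fastforce
    moreover have "0 < spread * z b" using spread_pos step(3) by simp
    ultimately show ?case by linarith
  qed (use i0 in simp)
qed

lemma strict_subeigen_imp_smaller_candidate:
  assumes ypos: "\<And>j. j \<in> {1..n} \<Longrightarrow> 0 < y j"
    and yst: "\<And>i. i \<in> {1..n} \<Longrightarrow> tensor_apply_real y i < r * y i ^ (m - 1)"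
    and r: "r \<le> entry_sum_bound"
  shows "\<exists>x\<in>pf_candidates. x 0 < r"
proof -
  define \<sigma> where "\<sigma> = (\<Sum>j\<in>{1..n}. y j)"
  have \<sigma>: "0 < \<sigma>" unfolding \<sigma>_def using ypos dim_pos by (intro sum_pos) auto
  define y' where "y' j = (1 / \<sigma>) * y j" for j
  have y'pos: "\<And>j. j \<in> {1..n} \<Longrightarrow> 0 < y' j" using ypos \<sigma> by (simp add: y'_def)
  have y'sum: "(\<Sum>j\<in>{1..n}. y' j) = 1"
    unfolding y'_def sum_distrib_left[symmetric] \<sigma>_def[symmetric] using \<sigma> by simp
  have y'st: "tensor_apply_real y' i < r * y' i ^ (m - 1)" if i: "i \<in> {1..n}" for i
  proof -
    have "tensor_apply_real y' i = (1 / \<sigma>) ^ (m - 1) * tensor_apply_real y i"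
      unfolding y'_def by (rule tensor_apply_real_const_mult)
    also have "\<dots> < (1 / \<sigma>) ^ (m - 1) * (r * y i ^ (m - 1))" using yst i \<sigma> by simp
    also have "\<dots> = r * y' i ^ (m - 1)" unfolding y'_def power_mult_distrib by simp
    finally show ?thesis .
  qed
  have y'pw: "\<And>i. i \<in> {1..n} \<Longrightarrow> 0 < y' i ^ (m - 1)" using y'pos by simp
  define r' where "r' = Max ((\<lambda>i. tensor_apply_real y' i / y' i ^ (m - 1)) ` {1..n})"
  have fin: "finite ((\<lambda>i. tensor_apply_real y' i / y' i ^ (m - 1)) ` {1..n})"
    "(\<lambda>i. tensor_apply_real y' i / y' i ^ (m - 1)) ` {1..n} \<noteq> {}"
    using dim_pos by auto
  have r'r: "r' < r"
    unfolding r'_def using y'st y'pw by (subst Max_less_iff[OF fin]) (auto simp: divide_less_eq)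
  have r'ge: "tensor_apply_real y' i \<le> r' * y' i ^ (m - 1)" if i: "i \<in> {1..n}" for i
  proof -
    have "tensor_apply_real y' i / y' i ^ (m - 1) \<le> r'" unfolding r'_def using fin i by auto
    then show ?thesis using y'pw[OF i] by (simp add: divide_le_eq)
  qed
  have r'0: "0 \<le> r'"
  proof -
    have "0 \<le> tensor_apply_real y' 1 / y' 1 ^ (m - 1)"
      using tensor_apply_real_nonneg[of y' 1] y'pos dim_pos by (simp add: less_imp_le)
    also have "\<dots> \<le> r'" unfolding r'_def using fin dim_pos by auto
    finally show ?thesis .
  qed
  define x where "x j = (if j = 0 then r' else if j \<le> n then y' j else 0)" for j
  have agree: "\<And>j. j \<in> {1..n} \<Longrightarrow> x j = y' j" by (simp add: x_def)
  have "y' j \<le> 1" if j: "j \<in> {1..n}" for j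
    using member_le_sum[of j "{1..n}" y'] j y'pos y'sum by (simp add: less_imp_le)
  then have "\<forall>i. x i \<in> (if i = 0 then {0..entry_sum_bound} else if i \<le> n then {0..1} else {0})"
    using r'0 r'r r y'pos by (auto simp: x_def less_imp_le)
  moreover have "(\<Sum>i\<in>{1..n}. x i) = 1" using y'sum agree by simp
  moreover have "spread * x u \<le> x w"
    if xs: "xs \<in> tidx m n" "A xs \<noteq> 0" and uw: "u \<in> set xs" "w \<in> set xs" for xs u w
  proof -
    have "spread * y' u \<le> y' w"
      using y'pos r'r r r'ge by (intro support_ratio_bound[where r=r', OF _ _ _ xs uw]) auto
    then show ?thesis using agree tidx_memD[OF xs(1)] uw by simp
  qed
  moreover have "tensor_apply_real x i \<le> x 0 * x i ^ (m - 1)" if i: "i \<in> {1..n}" for i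
  proof -
    have "tensor_apply_real x i = tensor_apply_real y' i" by (rule tensor_apply_real_cong) (simp add: agree)
    then show ?thesis using r'ge[OF i] agree[OF i] by (simp add: x_def)
  qed
  ultimately have "x \<in> pf_candidates" unfolding pf_candidates_def by blast
  then show ?thesis using r'r by (intro bexI[of _ x]) (auto simp: x_def)
qed

lemma positive_eigenvector_exists:
  "\<exists>v r. (\<forall>j\<in>{1..n}. 0 < v j) \<and> v 1 = 1 \<and> 0 \<le> r \<and>
     (\<forall>i\<in>{1..n}. tensor_apply_real v i = r * v i ^ (m - 1))"
proof -
  have cont: "continuous_on pf_candidates (\<lambda>x::nat\<Rightarrow>real. x 0)"
    by (rule continuous_on_subset[OF continuous_on_product_coordinates]) simp
  obtain z where z: "z \<in> pf_candidates" and zmin: "\<And>y. y \<in> pf_candidates \<Longrightarrow> z 0 \<le> y 0"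
    using continuous_attains_inf[OF compact_pf_candidates pf_candidates_nonempty cont] by blast
  have zpos: "\<And>j. j \<in> {1..n} \<Longrightarrow> 0 < z j" using pf_candidate_pos[OF z] .
  have zsub: "\<And>i. i \<in> {1..n} \<Longrightarrow> tensor_apply_real z i \<le> z 0 * z i ^ (m - 1)"
    and z0: "0 \<le> z 0" "z 0 \<le> entry_sum_bound"
    using z unfolding pf_candidates_def by (auto dest: spec[of _ 0])
  have eig: "tensor_apply_real z i = z 0 * z i ^ (m - 1)" if i: "i \<in> {1..n}" for i
  proof (rule ccontr)
    assume "tensor_apply_real z i \<noteq> z 0 * z i ^ (m - 1)"
    then have "tensor_apply_real z i < z 0 * z i ^ (m - 1)" using zsub[OF i] by simp
    then obtain y where "\<forall>j\<in>{1..n}. 0 < y j" "\<forall>i\<in>{1..n}. tensor_apply_real y i < z 0 * y i ^ (m - 1)"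
      using strict_subeigen[OF zpos zsub i] by blast
    then obtain x where "x \<in> pf_candidates" "x 0 < z 0"
      using strict_subeigen_imp_smaller_candidate z0(2) by blast
    then show False using zmin by fastforce
  qed
  define v where "v j = (1 / z 1) * z j" for j
  have z1: "0 < z 1" using zpos dim_pos by simp
  have "tensor_apply_real v i = z 0 * v i ^ (m - 1)" if i: "i \<in> {1..n}" for i
    using eig[OF i] unfolding v_def tensor_apply_real_const_mult power_mult_distrib by simp
  moreover have "\<forall>j\<in>{1..n}. 0 < v j" "v 1 = 1" using zpos z1 by (simp_all add: v_def)
  ultimately show ?thesis using z0 by blast
qed

definition pvec :: "nat \<Rightarrow> real" where
  "pvec = (SOME v. \<exists>r. (\<forall>j\<in>{1..n}. 0 < v j) \<and> v 1 = 1 \<and> 0 \<le> r \<and>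
     (\<forall>i\<in>{1..n}. tensor_apply_real v i = r * v i ^ (m - 1)))"

definition pval :: real where
  "pval = (SOME r. (\<forall>j\<in>{1..n}. 0 < pvec j) \<and> pvec 1 = 1 \<and> 0 \<le> r \<and>
     (\<forall>i\<in>{1..n}. tensor_apply_real pvec i = r * pvec i ^ (m - 1)))"

lemma pvec_pval: "(\<forall>j\<in>{1..n}. 0 < pvec j) \<and> pvec 1 = 1 \<and> 0 \<le> pval \<and>
     (\<forall>i\<in>{1..n}. tensor_apply_real pvec i = pval * pvec i ^ (m - 1))"
  unfolding pval_def using someI_ex[OF positive_eigenvector_exists, folded pvec_def] by (rule someI_ex)

lemma pvec_pos: "j \<in> {1..n} \<Longrightarrow> 0 < pvec j" and pvec_1: "pvec 1 = 1" and pval_nonneg: "0 \<le> pval"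
  and pvec_eigen: "i \<in> {1..n} \<Longrightarrow> tensor_apply_real pvec i = pval * pvec i ^ (m - 1)"
  using pvec_pval by auto

text \<open>Compare |x| with the least multiple t pvec dominating it at a coordinate where the
  two agree.\<close>
lemma eigenvalue_norm_le_pval:
  assumes ep: "is_eigenpair m n A lam x"
  shows "cmod lam \<le> pval"
proof -
  define w where "w j = cmod (x j)" for j
  obtain k where k: "k \<in> {1..n}" "x k \<noteq> 0" using ep by (auto simp: is_eigenpair_def)
  define t where "t = Max ((\<lambda>j. w j / pvec j) ` {1..n})"
  have fin: "finite ((\<lambda>j. w j / pvec j) ` {1..n})" "(\<lambda>j. w j / pvec j) ` {1..n} \<noteq> {}"
    using dim_pos by auto
  obtain k2 where k2: "k2 \<in> {1..n}" "w k2 / pvec k2 = t" using Max_in[OF fin] by (auto simp: t_def)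
  have "0 < w k / pvec k" using k pvec_pos[of k] by (simp add: w_def)
  also have "w k / pvec k \<le> t" using fin k unfolding t_def by auto
  finally have tpos: "0 < t" .
  have wk2: "w k2 = t * pvec k2" using k2 pvec_pos[of k2] by (simp add: field_simps)
  have wk2p: "0 < w k2" using wk2 tpos pvec_pos[OF k2(1)] by simp
  have tge: "0 \<le> w j \<and> w j \<le> t * pvec j" if j: "j \<in> {1..n}" for j
  proof -
    have "w j / pvec j \<le> t" using fin j by (auto simp: t_def)
    then show ?thesis using pvec_pos[OF j] by (simp add: divide_le_eq w_def)
  qed
  have "cmod lam * w k2 ^ (m - 1) = cmod (tensor_apply m n A x k2)"
    using ep k2 by (simp add: is_eigenpair_def norm_mult norm_power w_def)
  also have "\<dots> \<le> tensor_apply_real w k2" unfolding w_def by (rule norm_tensor_apply_le[OF k2(1)])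
  also have "\<dots> \<le> tensor_apply_real (\<lambda>j. t * pvec j) k2" using tge k2 by (intro tensor_apply_real_mono) auto
  also have "\<dots> = pval * w k2 ^ (m - 1)"
    using wk2 by (simp add: tensor_apply_real_const_mult pvec_eigen[OF k2(1)] power_mult_distrib)
  finally show ?thesis using wk2p by simp
qed

lemma spectral_radius_eq_pval: "spectral_radius m n A = pval"
  unfolding spectral_radius_def
proof (rule cSup_eq_maximum)
  have "is_eigenpair m n A (complex_of_real pval) (\<lambda>j. complex_of_real (pvec j))"
    unfolding is_eigenpair_def using dim_pos pvec_1 pvec_eigen
    by (auto simp: tensor_apply_of_real intro!: bexI[of _ 1])
  then show "pval \<in> {cmod lam |lam. \<exists>x. is_eigenpair m n A lam x}" using pval_nonneg by force
qed (use eigenvalue_norm_le_pval in blast)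

lemma PV_eigen:
  "y \<in> PV m n A \<Longrightarrow> i \<in> {1..n} \<Longrightarrow> tensor_apply m n A y i = complex_of_real pval * y i ^ (m - 1)"
  by (auto simp: PV_def is_eigenpair_def spectral_radius_eq_pval)

lemma PV_extensional: "y \<in> PV m n A \<Longrightarrow> y \<in> extensional {1..n}"
  by (auto simp: PV_def PiE_def)

text \<open>Every normalized eigenvector for the spectral radius has modulus pvec, since |y|
  satisfies pval |y|^{[m-1]} \<le> A |y|^{m-1}.\<close>
lemma PV_norm:
  assumes y: "y \<in> PV m n A" and i: "i \<in> {1..n}"
  shows "cmod (y i) = pvec i"
proof -
  define w where "w j = cmod (y j)" for j
  have "pval * w i ^ (m - 1) \<le> tensor_apply_real w i" if i: "i \<in> {1..n}" for i
    unfolding w_def using norm_tensor_apply_le[OF i, of y] PV_eigen[OF y i] pval_nonneg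
    by (simp add: w_def norm_mult norm_power)
  then obtain t where t: "0 \<le> t" "\<forall>j\<in>{1..n}. w j = t * pvec j"
    using supereigen_is_multiple[of pvec pval w] pvec_pos pvec_eigen by (auto simp: w_def)
  moreover have "w 1 = 1" using y by (simp add: PV_def w_def)
  ultimately have "t = 1" using pvec_1 dim_pos by force
  then show ?thesis using t(2) i by (simp add: w_def)
qed

lemma PV_nonzero: "y \<in> PV m n A \<Longrightarrow> i \<in> {1..n} \<Longrightarrow> y i \<noteq> 0"
  using PV_norm pvec_pos by fastforce

lemma PV_phase_decomp: "y \<in> PV m n A \<Longrightarrow> i \<in> {1..n} \<Longrightarrow> y i = phase (y i) * complex_of_real (pvec i)"
  using phase_times_norm[of "y i"] PV_norm by simp

text \<open>The eigen-equation at i is a sum whose norm equals the sum of the norms, so all its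
  terms have the phase of y_i^{m-1}.\<close>
lemma PV_phase_prod:
  assumes y: "y \<in> PV m n A" and i: "i \<in> {1..n}" and ys: "ys \<in> tidx (m - 1) n" and nz: "A (i # ys) \<noteq> 0"
  shows "prod_list (map (\<lambda>j. phase (y j)) ys) = phase (y i) ^ (m - 1)"
proof -
  define u where "u = phase (y i) ^ (m - 1)"
  define W where "W zs = complex_of_real (A (i # zs)) * prod_list (map y zs)" for zs
  have u1: "cmod u = 1" using norm_phase[OF PV_nonzero[OF y i]] by (simp add: u_def norm_power)
  have py: "prod_list (map y zs)
      = prod_list (map (\<lambda>j. phase (y j)) zs) * complex_of_real (prod_list (map pvec zs))"
    if zs: "zs \<in> tidx (m - 1) n" for zs
  proof -
    have "prod_list (map y zs) = prod_list (map (\<lambda>j. phase (y j) * complex_of_real (pvec j)) zs)"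
      using PV_phase_decomp[OF y] tidx_memD[OF zs] by (intro arg_cong[where f=prod_list] map_cong) auto
    then show ?thesis by (simp add: prod_list_map_mult prod_list_map_of_real)
  qed
  have cW: "cmod (W zs) = A (i # zs) * prod_list (map pvec zs)" if zs: "zs \<in> tidx (m - 1) n" for zs
  proof -
    have "prod_list (map (\<lambda>j. cmod (y j)) zs) = prod_list (map pvec zs)"
      using PV_norm[OF y] tidx_memD[OF zs] by (intro arg_cong[where f=prod_list] map_cong) auto
    then show ?thesis using entry_Cons_nonneg[OF i zs] by (simp add: W_def norm_mult norm_prod_list_map)
  qed
  have "sum W (tidx (m - 1) n) = tensor_apply m n A y i" by (simp add: W_def tensor_apply_def)
  also have "\<dots> = complex_of_real pval * y i ^ (m - 1)" by (rule PV_eigen[OF y i])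
  also have "\<dots> = u * complex_of_real (pval * pvec i ^ (m - 1))"
    by (subst PV_phase_decomp[OF y i]) (simp add: u_def power_mult_distrib)
  also have "pval * pvec i ^ (m - 1) = (\<Sum>zs\<in>tidx (m - 1) n. cmod (W zs))"
    using pvec_eigen[OF i] cW by (simp add: tensor_apply_real_def)
  finally have "W ys = u * complex_of_real (cmod (W ys))"
    using sum_eq_unit_times_norm_sum_imp_aligned[OF tidx_finite u1] ys by blast
  then have "complex_of_real (A (i # ys)) * prod_list (map (\<lambda>j. phase (y j)) ys)
        * complex_of_real (prod_list (map pvec ys))
      = u * (complex_of_real (A (i # ys)) * complex_of_real (prod_list (map pvec ys)))"
    using py[OF ys] cW[OF ys] by (simp add: W_def mult.assoc)
  moreover have "complex_of_real (A (i # ys)) * complex_of_real (prod_list (map pvec ys)) \<noteq> 0"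
    using nz prod_list_map_pos[of ys pvec] pvec_pos tidx_memD[OF ys] by auto
  ultimately show ?thesis unfolding u_def by (simp add: mult.commute mult.left_commute)
qed

lemma phase_in_stab_set:
  assumes y: "y \<in> PV m n A"
  shows "(\<lambda>j\<in>{1..n}. phase (y j)) \<in> stab_set m n A"
  unfolding stab_set_iff[OF order_pos]
proof (intro conjI ballI impI)
  show "(\<lambda>j\<in>{1..n}. phase (y j)) \<in> {1..n} \<rightarrow>\<^sub>E (UNIV - {0})"
    using phase_nonzero PV_nonzero[OF y] by auto
  show "(\<lambda>j\<in>{1..n}. phase (y j)) 1 = 1" using y dim_pos by (simp add: PV_def phase_def)
  fix xs assume xs: "xs \<in> tidx m n" "A xs \<noteq> 0"
  note sp = tidx_hd_tl[OF order_pos xs(1)]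
  have "prod_list (map (\<lambda>j\<in>{1..n}. phase (y j)) (tl xs)) = prod_list (map (\<lambda>j. phase (y j)) (tl xs))"
    using tidx_memD[OF sp(3)] by (intro arg_cong[where f=prod_list] map_cong) auto
  also have "\<dots> = phase (y (hd xs)) ^ (m - 1)" using PV_phase_prod[OF y sp(2,3)] xs(2) sp(1) by metis
  finally show "prod_list (map (\<lambda>j\<in>{1..n}. phase (y j)) (tl xs)) = (\<lambda>j\<in>{1..n}. phase (y j)) (hd xs) ^ (m - 1)"
    using sp(2) by simp
qed

lemma stab_times_pvec_in_PV:
  assumes D: "D \<in> stab_set m n A"
  shows "(\<lambda>j\<in>{1..n}. D j * complex_of_real (pvec j)) \<in> PV m n A"
proof -
  define y where "y = (\<lambda>j\<in>{1..n}. D j * complex_of_real (pvec j))"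
  have y1: "y 1 = 1" using D dim_pos pvec_1 by (simp add: y_def stab_set_def)
  have "tensor_apply m n A y i = complex_of_real pval * y i ^ (m - 1)" if i: "i \<in> {1..n}" for i
  proof -
    have "complex_of_real (A (i # ys)) * prod_list (map y ys)
        = D i ^ (m - 1) * complex_of_real (A (i # ys) * prod_list (map pvec ys))"
      if ys: "ys \<in> tidx (m - 1) n" for ys
    proof (cases "A (i # ys) = 0")
      case False
      have "prod_list (map y ys) = prod_list (map (\<lambda>j. D j * complex_of_real (pvec j)) ys)"
        using tidx_memD[OF ys] by (intro arg_cong[where f=prod_list] map_cong) (auto simp: y_def)
      moreover have "prod_list (map D ys) = D i ^ (m - 1)"
        using D tidx_Cons[OF order_pos i ys] False by (auto simp: stab_set_iff[OF order_pos])
      ultimately show ?thesis by (simp add: prod_list_map_mult prod_list_map_of_real)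
    qed simp
    then have "tensor_apply m n A y i
        = (\<Sum>ys\<in>tidx (m - 1) n. D i ^ (m - 1) * complex_of_real (A (i # ys) * prod_list (map pvec ys)))"
      unfolding tensor_apply_def by (rule sum.cong[OF refl])
    also have "\<dots> = D i ^ (m - 1) * complex_of_real (tensor_apply_real pvec i)"
      by (simp add: tensor_apply_real_def sum_distrib_left)
    also have "\<dots> = complex_of_real pval * y i ^ (m - 1)"
      using pvec_eigen[OF i] i by (simp add: y_def power_mult_distrib)
    finally show ?thesis .
  qed
  then have "is_eigenpair m n A (complex_of_real (spectral_radius m n A)) y"
    using y1 dim_pos by (auto simp: is_eigenpair_def spectral_radius_eq_pval intro!: bexI[of _ 1])
  then show ?thesis using y1 by (simp add: PV_def y_def)
qed

text \<open>The entries of a stabilizing D are m-th roots of unity: D_a^m is the product of D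
  over any nonzero entry starting with a, which by combinatorial symmetry is also D_b^m for
  each index b of that entry; weak irreducibility propagates D_1^m = 1.\<close>
lemma stab_set_pow_order:
  assumes D: "D \<in> stab_set m n A" and i: "i \<in> {1..n}"
  shows "D i ^ m = 1"
proof -
  have pow_m: "prod_list (map D xs) = D (hd xs) ^ m" if xs: "xs \<in> tidx m n" "A xs \<noteq> 0" for xs
  proof -
    have "prod_list (map D xs) = D (hd xs) * D (hd xs) ^ (m - 1)"
      using D xs tidx_hd_tl(1)[OF order_pos xs(1)] unfolding stab_set_iff[OF order_pos]
      by (metis list.simps(9) prod_list.Cons)
    also have "\<dots> = D (hd xs) ^ m" using order_pos by (simp add: power_Suc[symmetric])
    finally show ?thesis .
  qed
  have arc: "D a ^ m = D b ^ m" if ab: "(a, b) \<in> tensor_digraph m n A" for a b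
  proof -
    obtain ys where ys: "a \<in> {1..n}" "ys \<in> tidx (m - 1) n" "A (a # ys) \<noteq> 0" "b \<in> set ys"
      using tensor_digraph_arcE[OF ab] by blast
    have xs: "a # ys \<in> tidx m n" using tidx_Cons[OF order_pos ys(1,2)] .
    have b: "b \<in> set (a # ys)" using ys(4) by simp
    have "D a ^ m = prod_list (map D (a # ys))" using pow_m[OF xs ys(3)] by simp
    also have "\<dots> = prod_list (map D (b # remove1 b (a # ys)))"
      using support_rotate(4)[OF xs ys(3) b] by (metis prod_list_map_mset_eq)
    also have "\<dots> = D b ^ m"
      using pow_m[OF support_rotate(2,3)[OF xs ys(3) b]] by (simp only: list.sel(1))
    finally show ?thesis .
  qed
  from tensor_digraph_path[OF _ i] dim_pos have "(1, i) \<in> (tensor_digraph m n A)\<^sup>*" by simp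
  then show ?thesis
  proof (induction rule: rtrancl_induct)
    case base then show ?case using D by (simp add: stab_set_def)
  next
    case (step b c) then show ?case using arc by metis
  qed
qed

lemma finite_stab_set: "finite (stab_set m n A)"
proof (rule finite_subset)
  show "stab_set m n A \<subseteq> {1..n} \<rightarrow>\<^sub>E {z. z ^ m = 1}"
    using stab_set_pow_order by (auto simp: stab_set_def PiE_def Pi_def)
  show "finite ({1..n} \<rightarrow>\<^sub>E {z::complex. z ^ m = 1})"
    using order_pos by (intro finite_PiE finite_roots_unity) auto
qed

lemma PV_eq_image_stab_set:
  "PV m n A = (\<lambda>D. \<lambda>j\<in>{1..n}. D j * complex_of_real (pvec j)) ` stab_set m n A"
proof (intro equalityI subsetI)
  fix y assume y: "y \<in> PV m n A"
  have "y = (\<lambda>j\<in>{1..n}. (\<lambda>j\<in>{1..n}. phase (y j)) j * complex_of_real (pvec j))"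
    using PV_phase_decomp[OF y] PV_extensional[OF y] by (auto simp: extensional_def)
  then show "y \<in> (\<lambda>D. \<lambda>j\<in>{1..n}. D j * complex_of_real (pvec j)) ` stab_set m n A"
    using phase_in_stab_set[OF y] by blast
qed (use stab_times_pvec_in_PV in blast)

lemma finite_PV: "finite (PV m n A)"
  unfolding PV_eq_image_stab_set using finite_stab_set by simp

lemma pvec_complex_in_PV: "(\<lambda>j\<in>{1..n}. complex_of_real (pvec j)) \<in> PV m n A"
proof -
  have "(\<lambda>j\<in>{1..n}. (\<lambda>j\<in>{1..n}. 1) j * complex_of_real (pvec j)) \<in> PV m n A"
    using stab_times_pvec_in_PV[OF stab_set_one[OF order_pos dim_pos]] .
  moreover have "(\<lambda>j\<in>{1..n}. (\<lambda>j\<in>{1..n}. 1) j * complex_of_real (pvec j))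
      = (\<lambda>j\<in>{1..n}. complex_of_real (pvec j))"
    by (intro restrict_ext) simp
  ultimately show ?thesis by simp
qed

lemma vpos_eq: "vpos m n A = (\<lambda>j\<in>{1..n}. complex_of_real (pvec j))"
  unfolding vpos_def
proof (rule the_equality)
  show "(\<lambda>j\<in>{1..n}. complex_of_real (pvec j)) \<in> PV m n A \<and>
      (\<forall>i\<in>{1..n}. Im ((\<lambda>j\<in>{1..n}. complex_of_real (pvec j)) i) = 0
        \<and> 0 < Re ((\<lambda>j\<in>{1..n}. complex_of_real (pvec j)) i))"
    using pvec_complex_in_PV pvec_pos by simp
next
  fix y assume y: "y \<in> PV m n A \<and> (\<forall>i\<in>{1..n}. Im (y i) = 0 \<and> 0 < Re (y i))"
  have "y j = complex_of_real (pvec j)" if j: "j \<in> {1..n}" for j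
  proof -
    have "y j = complex_of_real (Re (y j))" using y j by (simp add: complex_eq_iff)
    then show ?thesis using PV_norm[of y j] y j by (metis norm_of_real abs_of_pos)
  qed
  then show "y = (\<lambda>j\<in>{1..n}. complex_of_real (pvec j))"
    using PV_extensional[of y] y by (auto simp: extensional_def)
qed

lemma pv_submodule_vpos: "pv_submodule m n A {vpos m n A}"
proof -
  have "pv_op m n A (vpos m n A) (vpos m n A) = vpos m n A"
    unfolding pv_op_def vpos_eq using pvec_pos by (intro restrict_ext) (simp add: abs_of_pos)
  then show ?thesis unfolding pv_submodule_def using pvec_complex_in_PV by (simp add: vpos_eq)
qed

end

section \<open>Stabilizing dimension\<close>

lemma strict_chain_length_le_card:
  assumes fin: "finite U" and sub: "\<And>j. j \<le> k \<Longrightarrow> H j \<subseteq> U" and chain: "\<And>j. j < k \<Longrightarrow> H j \<subset> H (Suc j)"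
  shows "k \<le> card U"
proof -
  have "j \<le> card (H j)" if "j \<le> k" for j
    using that
  proof (induction j)
    case (Suc j)
    have "card (H j) < card (H (Suc j))"
      using chain Suc.prems finite_subset[OF sub[OF Suc.prems] fin] by (intro psubset_card_mono) auto
    then show ?case using Suc by simp
  qed simp
  moreover have "card (H k) \<le> card U" using sub[of k] fin by (intro card_mono) auto
  ultimately show ?thesis by fastforce
qed

lemma pv_submodule_image:
  assumes H: "pv_submodule m n B H"
    and into: "\<Phi> ` PV m n B \<subseteq> PV m n C" and v: "\<Phi> (vpos m n B) = vpos m n C"
    and op: "\<And>y z. y \<in> PV m n B \<Longrightarrow> z \<in> PV m n B \<Longrightarrow> \<Phi> (pv_op m n B y z) = pv_op m n C (\<Phi> y) (\<Phi> z)"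
  shows "pv_submodule m n C (\<Phi> ` H)"
proof -
  have HP: "H \<subseteq> PV m n B" using H by (simp add: pv_submodule_def)
  have "pv_op m n C y' z' \<in> \<Phi> ` H" if y'z': "y' \<in> \<Phi> ` H" "z' \<in> \<Phi> ` H" for y' z'
  proof -
    obtain y z where yz: "y \<in> H" "z \<in> H" "y' = \<Phi> y" "z' = \<Phi> z" using y'z' by blast
    moreover have "y \<in> PV m n B" "z \<in> PV m n B" using HP yz by auto
    ultimately have "pv_op m n C y' z' = \<Phi> (pv_op m n B y z)" using op by simp
    moreover have "pv_op m n B y z \<in> H" using H yz by (simp add: pv_submodule_def)
    ultimately show ?thesis by simp
  qed
  moreover have "\<Phi> ` H \<subseteq> PV m n C" using HP into by blast
  moreover have "vpos m n C \<in> \<Phi> ` H" using H v unfolding pv_submodule_def by (metis imageI)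
  ultimately show ?thesis unfolding pv_submodule_def by blast
qed

lemma stab_dim_le_of_embedding:
  assumes finC: "finite (PV m n C)" and finB: "finite (PV m n B)"
    and triv: "pv_submodule m n B {vpos m n B}"
    and into: "\<Phi> ` PV m n B \<subseteq> PV m n C" and inj: "inj_on \<Phi> (PV m n B)"
    and v: "\<Phi> (vpos m n B) = vpos m n C"
    and op: "\<And>y z. y \<in> PV m n B \<Longrightarrow> z \<in> PV m n B \<Longrightarrow> \<Phi> (pv_op m n B y z) = pv_op m n C (\<Phi> y) (\<Phi> z)"
  shows "stab_dim m n B \<le> stab_dim m n C"
proof -
  define chain where "chain D k \<longleftrightarrow> (\<exists>H :: nat \<Rightarrow> (nat \<Rightarrow> complex) set.
      (\<forall>j\<le>k. pv_submodule m n D (H j)) \<and> (\<forall>j<k. H j \<subset> H (Suc j)))" for D k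
  have bound: "k \<le> card (PV m n D)" if fin: "finite (PV m n D)" and "chain D k" for D k
  proof -
    obtain H where H: "\<forall>j\<le>k. pv_submodule m n D (H j)" "\<forall>j<k. H j \<subset> H (Suc j)"
      using \<open>chain D k\<close> unfolding chain_def by blast
    show ?thesis
      by (rule strict_chain_length_le_card[OF fin, of k H]) (use H in \<open>auto simp: pv_submodule_def\<close>)
  qed
  have map: "chain C k" if Bk: "chain B k" for k
  proof -
    obtain H where H: "\<forall>j\<le>k. pv_submodule m n B (H j)" "\<forall>j<k. H j \<subset> H (Suc j)"
      using Bk unfolding chain_def by blast
    have HP: "H j \<subseteq> PV m n B" if "j \<le> k" for j
      using H(1) that by (simp add: pv_submodule_def)
    have "pv_submodule m n C (\<Phi> ` H j)" if "j \<le> k" for j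
      using H(1) that pv_submodule_image[OF _ into v op] by blast
    moreover have "\<Phi> ` H j \<subset> \<Phi> ` H (Suc j)" if "j < k" for j
      using H(2) that HP[of "Suc j"] by (intro image_strict_mono[OF inj_on_subset[OF inj]]) auto
    ultimately show ?thesis unfolding chain_def by (intro exI[of _ "\<lambda>j. \<Phi> ` H j"]) blast
  qed
  have "chain B 0" using triv unfolding chain_def by (intro exI[of _ "\<lambda>_. {vpos m n B}"]) auto
  have dims: "stab_dim m n D = Greatest (chain D)" for D
    unfolding stab_dim_def by (rule arg_cong[where f=Greatest]) (simp add: fun_eq_iff chain_def)
  have "chain B (Greatest (chain B))"
    by (rule GreatestI_nat[where P="chain B", OF \<open>chain B 0\<close>]) (rule bound[OF finB])
  then have "chain C (stab_dim m n B)" using map dims by simp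
  then show ?thesis unfolding dims[of C] by (rule Greatest_le_nat) (rule bound[OF finC])
qed

text \<open>The embedding is y \<mapsto> D_y vhat_p; it lands in PV_rho(Ahat) because D_y stabilizes A and
  hence Ahat.\<close>
lemma stab_dim_mono:
  assumes "pf_tensor m n A" and "pf_tensor m n Ahat" and sp: "sp_le m n Ahat A"
  shows "stab_dim m n A \<le> stab_dim m n Ahat"
proof -
  interpret a: pf_tensor m n A by fact
  interpret b: pf_tensor m n Ahat by fact
  define \<Phi> where "\<Phi> y = (\<lambda>i\<in>{1..n}. phase (y i) * complex_of_real (b.pvec i))" for y
  have phase_\<Phi>: "phase (\<Phi> y i) = phase (y i)" if "y \<in> PV m n A" "i \<in> {1..n}" for y i
    using phase_unit_times_pos[OF b.pvec_pos norm_phase[OF a.PV_nonzero]] that by (simp add: \<Phi>_def)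
  have "\<Phi> ` PV m n A \<subseteq> PV m n Ahat"
  proof
    fix y' assume "y' \<in> \<Phi> ` PV m n A"
    then obtain y where y: "y \<in> PV m n A" "y' = \<Phi> y" by blast
    have "(\<lambda>j\<in>{1..n}. phase (y j)) \<in> stab_set m n Ahat"
      using a.phase_in_stab_set[OF y(1)] stab_set_mono[OF a.order_pos sp] by blast
    from b.stab_times_pvec_in_PV[OF this] show "y' \<in> PV m n Ahat"
      unfolding y(2) \<Phi>_def by (simp cong: restrict_cong)
  qed
  moreover have "inj_on \<Phi> (PV m n A)"
  proof (rule inj_onI)
    fix y z assume y: "y \<in> PV m n A" and z: "z \<in> PV m n A" and eq: "\<Phi> y = \<Phi> z"
    have "y i = z i" if i: "i \<in> {1..n}" for i
      using a.PV_phase_decomp[OF y i] a.PV_phase_decomp[OF z i] phase_\<Phi>[OF y i] phase_\<Phi>[OF z i] eq by simp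
    then show "y = z" using a.PV_extensional[OF y] a.PV_extensional[OF z] by (auto intro: extensionalityI)
  qed
  moreover have "\<Phi> (vpos m n A) = vpos m n Ahat"
    unfolding a.vpos_eq b.vpos_eq \<Phi>_def using a.pvec_pos by (intro restrict_ext) (simp add: phase_pos_real)
  moreover have "\<Phi> (pv_op m n A y z) = pv_op m n Ahat (\<Phi> y) (\<Phi> z)"
    if y: "y \<in> PV m n A" and z: "z \<in> PV m n A" for y z
    unfolding pv_op_def[of m n Ahat] \<Phi>_def[of "pv_op m n A y z"]
  proof (intro restrict_ext)
    fix i assume i: "i \<in> {1..n}"
    have u: "cmod (phase (y i) * phase (z i)) = 1"
      using norm_phase[OF a.PV_nonzero[OF y i]] norm_phase[OF a.PV_nonzero[OF z i]] by (simp add: norm_mult)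
    have "phase (pv_op m n A y z i) = phase (y i) * phase (z i)"
      using phase_unit_times_pos[OF a.pvec_pos[OF i] u] i
      by (simp add: pv_op_def a.vpos_eq phase_def[symmetric])
    then show "phase (pv_op m n A y z i) * complex_of_real (b.pvec i) =
        \<Phi> y i / complex_of_real (cmod (\<Phi> y i)) * (\<Phi> z i / complex_of_real (cmod (\<Phi> z i)))
          * vpos m n Ahat i"
      using phase_\<Phi>[OF y i] phase_\<Phi>[OF z i] i by (simp add: b.vpos_eq phase_def[symmetric])
  qed
  ultimately show ?thesis by (rule stab_dim_le_of_embedding[OF b.finite_PV a.finite_PV a.pv_submodule_vpos])
qed

theorem theorem3p13:
  fixes m n :: nat and A Ahat :: tensor
  assumes "m \<ge> 2" and "n \<ge> 1"
    and "nonneg_tensor m n A" and "nonneg_tensor m n Ahat"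
    and "comb_symmetric m n A" and "comb_symmetric m n Ahat"
    and "weakly_irreducible m n A" and "weakly_irreducible m n Ahat"
    and "sp_le m n Ahat A"
  shows "zm_submodule m n (PS0 m n A) (PS0 m n Ahat)
         \<and> stab_index m n A dvd stab_index m n Ahat
         \<and> stab_dim m n A \<le> stab_dim m n Ahat"
proof -
  have m: "1 \<le> m" using assms(1) by simp
  have "pf_tensor m n A" and "pf_tensor m n Ahat" using assms by unfold_locales auto
  then show ?thesis
    using PS0_zm_submodule[OF m assms(2,9)] stab_index_dvd[OF m assms(2,9)]
      stab_dim_mono[OF _ _ assms(9)]
    by blast
qed
end
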